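(* Let $k\ge 1$ be an integer and let $G$ be a finite abelian group with primary decomposition $G\cong\bigoplus_i (\mathbb{Z}_{p_i^{r_i}})^{d_i}$, where the pairs $(p_i,r_i)$ (with $p_i$ prime, $r_i\ge 1$) are pairwise distinct and $d_i\ge 1$ is the multiplicity of the cyclic summand $\mathbb{Z}_{p_i^{r_i}}$. Suppose that at least one of the following conditions holds: 1) for every $i$ with $p_i=2$ or $p_i=3$ we have $d_i\ge 2$ (no restriction on $d_i$ for $p_i>3$); 2) no $p_i$ equals $2$, and $k$ is even; 3) for every $i$ with $p_i=2$ we have $d_i\ge 2$, and $k$ is divisible by $4$; 4) for every $i$ with $p_i=2$ we have $d_i\ge 3$, and $k$ is even; 5) for every $i$ with $p_i=2$ we have $d_i\ge 2$ and $d_i\ne 3$, and $k$ is even with $k\ge 4$. Then the restricted wreath product $G\wr\mathbb{Z}^k$ admits an automorphism $\varphi$ with finite Reidemeister number $R(\varphi)<\infty$; that is, $G\wr\mathbb{Z}^k$ does not have the $R_\infty$ property.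
   Context: For a group $\Gamma$ and an automorphism $\varphi:\Gamma\to\Gamma$, the Reidemeister (twisted conjugacy) classes of $\varphi$ are the classes of the equivalence relation $x\sim gx\varphi(g^{-1})$ ($g\in\Gamma$), and the Reidemeister number $R(\varphi)$ is the number of these classes (possibly infinite). A group has the $R_\infty$ property if every automorphism of it has $R(\varphi)=\infty$. The restricted wreath product $G\wr\mathbb{Z}^k$ is the semidirect product $\Sigma\rtimes_\alpha\mathbb{Z}^k$, where $\Sigma=\bigoplus_{x\in\mathbb{Z}^k}G_x$ is the direct sum of copies $G_x\cong G$ and $\mathbb{Z}^k$ acts by shifting indices: $\alpha(x)(g_y)=g_{x+y}$. *)

theory Defs
  imports "HOL-Algebra.Algebra" "HOL-Computational_Algebra.Primes"
begin

text \<open>The free abelian group Z^k, realised as integer vectors indexed by nat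
  that vanish at every index >= k.\<close>
definition Zk :: "nat \<Rightarrow> (nat \<Rightarrow> int) set" where
  "Zk k = {v. \<forall>i\<ge>k. v i = 0}"

text \<open>Restricted wreath product G wr Z^k = (direct sum over x in Z^k of G_x) semidirect Z^k,
  where Z^k acts by shifting indices: alpha(x)(g_y) = g_(x+y), i.e.
  (alpha(x) f)(z) = f(z - x).\<close>
definition wreath_Zk :: "('a, 'b) monoid_scheme \<Rightarrow> nat \<Rightarrow> (((nat \<Rightarrow> int) \<Rightarrow> 'a) \<times> (nat \<Rightarrow> int)) monoid" where
  "wreath_Zk G k =
    \<lparr> carrier = {(f, x). x \<in> Zk k \<and> (\<forall>z. f z \<in> carrier G)
                   \<and> (\<forall>z. z \<notin> Zk k \<longrightarrow> f z = \<one>\<^bsub>G\<^esub>)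
                   \<and> finite {z. f z \<noteq> \<one>\<^bsub>G\<^esub>}},
      monoid.mult = (\<lambda>(f, x) (g, y). (\<lambda>z. f z \<otimes>\<^bsub>G\<^esub> g (\<lambda>i. z i - x i), \<lambda>i. x i + y i)),
      one = (\<lambda>z. \<one>\<^bsub>G\<^esub>, \<lambda>i. 0) \<rparr>"

definition reid_rel :: "('a, 'b) monoid_scheme \<Rightarrow> ('a \<Rightarrow> 'a) \<Rightarrow> ('a \<times> 'a) set" where
  "reid_rel G \<phi> = {(x, y). x \<in> carrier G \<and> y \<in> carrier G \<and>
      (\<exists>g\<in>carrier G. y = g \<otimes>\<^bsub>G\<^esub> x \<otimes>\<^bsub>G\<^esub> \<phi> (inv\<^bsub>G\<^esub> g))}"

definition finite_reidemeister :: "('a, 'b) monoid_scheme \<Rightarrow> ('a \<Rightarrow> 'a) \<Rightarrow> bool" where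
  "finite_reidemeister G \<phi> \<longleftrightarrow> finite (carrier G // reid_rel G \<phi>)"

end

theory Submission
  imports Defs "HOL-Library.Function_Algebras"
begin

(* Choose an exponent m and two pieces of data: an automorphism psi of G
   such that psi^m has no fixed point besides 1, and an additive map M of Z^k with
   1 + M + ... + M^(m-1) = 0, so that M^m = 1.  Then phi(f, x) = (psi o f o M^-1, M x)
   is an automorphism of G wr Z^k.  Twisted conjugation by base elements kills the base
   component of every element: on each orbit of the affine map z |-> M^-1 (z - x),
   which has period m, the equation to solve is inverted by the norm map together with
   the bijectivity of a |-> a * psi^m(a)^-1 on the finite group G.  Twisted conjugation
   by (1, y) then changes x to x + y - M y, and the choice y = sum_j (j+1) M^j q shows
   that x may be reduced modulo m.  Hence every Reidemeister class contains some (1, x)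
   with 0 <= x_i < m.

   Both pieces of data are assembled from blocks.  M is block diagonal with companion
   matrices of cyclotomic polynomials: Phi_2 for m = 2, Phi_3 for m = 3, Phi_5 for
   m = 5, and Phi_5, Phi_7 for m = 35; this explains the conditions on k.  On each
   (Z/p^r)^d, psi is given by an integer matrix A such that A and A^m - 1 are invertible
   modulo p.  For odd p and odd m the scalar -1 works, for p > 3 and m = 2 the scalar 2.
   For p = 2 (and p = 3 when m = 2) one uses companion matrices of irreducible
   polynomials over F_p whose roots have multiplicative order not dividing m; their
   sizes generate, under addition, exactly the admissible multiplicities d. *)

section \<open>The lattice Z^k and the wreath product\<close>

lemma Zk_zero [simp]: "0 \<in> Zk k"
  by (simp add: Zk_def)

lemma Zk_add: "x \<in> Zk k \<Longrightarrow> y \<in> Zk k \<Longrightarrow> x + y \<in> Zk k"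
  by (simp add: Zk_def)

lemma Zk_minus: "x \<in> Zk k \<Longrightarrow> - x \<in> Zk k"
  by (simp add: Zk_def)

lemma Zk_diff: "x \<in> Zk k \<Longrightarrow> y \<in> Zk k \<Longrightarrow> x - y \<in> Zk k"
  by (simp add: Zk_def)

lemma Zk_diff_iff: "x \<in> Zk k \<Longrightarrow> z - x \<in> Zk k \<longleftrightarrow> z \<in> Zk k"
  by (auto simp: Zk_def)

lemma Zk_add_iff: "x \<in> Zk k \<Longrightarrow> z + x \<in> Zk k \<longleftrightarrow> z \<in> Zk k"
  by (auto simp: Zk_def)

lemma carrier_wreath_Zk:
  "(f, x) \<in> carrier (wreath_Zk G k) \<longleftrightarrow>
     x \<in> Zk k \<and> (\<forall>z. f z \<in> carrier G) \<and> (\<forall>z. z \<notin> Zk k \<longrightarrow> f z = \<one>\<^bsub>G\<^esub>)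
     \<and> finite {z. f z \<noteq> \<one>\<^bsub>G\<^esub>}"
  by (simp add: wreath_Zk_def)

lemma mult_wreath_Zk [simp]:
  "(f, x) \<otimes>\<^bsub>wreath_Zk G k\<^esub> (g, y) = (\<lambda>z. f z \<otimes>\<^bsub>G\<^esub> g (z - x), x + y)"
  by (simp add: wreath_Zk_def fun_diff_def plus_fun_def)

lemma one_wreath_Zk [simp]: "\<one>\<^bsub>wreath_Zk G k\<^esub> = (\<lambda>z. \<one>\<^bsub>G\<^esub>, 0)"
  by (simp add: wreath_Zk_def zero_fun_def)

lemma finite_support_translate:
  fixes x :: "nat \<Rightarrow> int"
  assumes "finite {z. g z \<noteq> c}"
  shows "finite {z. g (z - x) \<noteq> c}"
proof -
  have "{z. g (z - x) \<noteq> c} = (\<lambda>z. z - x) -` {z. g z \<noteq> c}" by auto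
  then show ?thesis
    using finite_vimageI[OF assms, of "\<lambda>z. z - x"] by (simp add: inj_on_def)
qed

lemma (in group) wreath_Zk_left_inverse:
  assumes "(g, y) \<in> carrier (wreath_Zk G k)"
  shows "(\<lambda>z. inv g (z + y), - y) \<in> carrier (wreath_Zk G k)"
    and "(\<lambda>z. inv g (z + y), - y) \<otimes>\<^bsub>wreath_Zk G k\<^esub> (g, y) = \<one>\<^bsub>wreath_Zk G k\<^esub>"
proof -
  have g: "y \<in> Zk k" "\<And>z. g z \<in> carrier G" "\<And>z. z \<notin> Zk k \<Longrightarrow> g z = \<one>"
    "finite {z. g z \<noteq> \<one>}"
    using assms by (auto simp: carrier_wreath_Zk)
  have "{z. inv g (z + y) \<noteq> \<one>} = {z. g (z - - y) \<noteq> \<one>}"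
    using g(2) by auto
  then have "finite {z. inv g (z + y) \<noteq> \<one>}"
    using finite_support_translate[OF g(4), of "- y"] by simp
  then show "(\<lambda>z. inv g (z + y), - y) \<in> carrier (wreath_Zk G k)"
    using g by (auto simp: carrier_wreath_Zk Zk_minus Zk_add_iff)
  show "(\<lambda>z. inv g (z + y), - y) \<otimes>\<^bsub>wreath_Zk G k\<^esub> (g, y) = \<one>\<^bsub>wreath_Zk G k\<^esub>"
    using g by (auto simp: fun_eq_iff)
qed

lemma (in group) group_wreath_Zk: "group (wreath_Zk G k)"
proof (rule groupI)
  fix a b assume "a \<in> carrier (wreath_Zk G k)" "b \<in> carrier (wreath_Zk G k)"
  moreover obtain f x g y where "a = (f, x)" "b = (g, y)" by fastforce
  ultimately have ab: "a = (f, x)" "b = (g, y)"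
    and f: "x \<in> Zk k" "\<And>z. f z \<in> carrier G" "finite {z. f z \<noteq> \<one>}"
    and g: "y \<in> Zk k" "\<And>z. g z \<in> carrier G" "\<And>z. z \<notin> Zk k \<Longrightarrow> g z = \<one>"
      "finite {z. g z \<noteq> \<one>}"
    by (auto simp: carrier_wreath_Zk)
  have "{z. f z \<otimes> g (z - x) \<noteq> \<one>} \<subseteq> {z. f z \<noteq> \<one>} \<union> {z. g (z - x) \<noteq> \<one>}"
    using f g by auto
  then have "finite {z. f z \<otimes> g (z - x) \<noteq> \<one>}"
    using f(3) finite_support_translate[OF g(4), of x] by (meson finite_UnI finite_subset)
  then show "a \<otimes>\<^bsub>wreath_Zk G k\<^esub> b \<in> carrier (wreath_Zk G k)"
    using \<open>a \<in> carrier (wreath_Zk G k)\<close> f g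
    by (auto simp: ab carrier_wreath_Zk Zk_add Zk_diff_iff)
next
  show "\<one>\<^bsub>wreath_Zk G k\<^esub> \<in> carrier (wreath_Zk G k)"
    by (simp add: carrier_wreath_Zk)
next
  fix a b c
  assume "a \<in> carrier (wreath_Zk G k)" "b \<in> carrier (wreath_Zk G k)" "c \<in> carrier (wreath_Zk G k)"
  moreover obtain f x g y h w where "a = (f, x)" "b = (g, y)" "c = (h, w)" by (metis surj_pair)
  ultimately show "a \<otimes>\<^bsub>wreath_Zk G k\<^esub> b \<otimes>\<^bsub>wreath_Zk G k\<^esub> c
      = a \<otimes>\<^bsub>wreath_Zk G k\<^esub> (b \<otimes>\<^bsub>wreath_Zk G k\<^esub> c)"
    by (auto simp: carrier_wreath_Zk m_assoc diff_diff_eq add.assoc)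
next
  fix a assume "a \<in> carrier (wreath_Zk G k)"
  then show "\<one>\<^bsub>wreath_Zk G k\<^esub> \<otimes>\<^bsub>wreath_Zk G k\<^esub> a = a"
    by (cases a) (auto simp: carrier_wreath_Zk)
next
  fix a assume "a \<in> carrier (wreath_Zk G k)"
  then show "\<exists>b\<in>carrier (wreath_Zk G k). b \<otimes>\<^bsub>wreath_Zk G k\<^esub> a = \<one>\<^bsub>wreath_Zk G k\<^esub>"
    using wreath_Zk_left_inverse by (metis surj_pair)
qed

lemma (in group) inv_wreath_Zk:
  assumes "(g, y) \<in> carrier (wreath_Zk G k)"
  shows "inv\<^bsub>wreath_Zk G k\<^esub> (g, y) = (\<lambda>z. inv g (z + y), - y)"
  using group.inv_equality[OF group_wreath_Zk wreath_Zk_left_inverse(2)[OF assms] assms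
      wreath_Zk_left_inverse(1)[OF assms]] .

lemma equiv_reid_rel:
  assumes "group H" and "\<phi> \<in> hom H H"
  shows "equiv (carrier H) (reid_rel H \<phi>)"
proof -
  interpret H: group H by (rule assms(1))
  interpret h: group_hom H H \<phi> using assms by (simp add: group_hom_def group_hom_axioms_def)
  show ?thesis
  proof (rule equivI)
    show "refl_on (carrier H) (reid_rel H \<phi>)"
      by (rule refl_onI) (auto simp: reid_rel_def intro!: bexI[of _ "\<one>\<^bsub>H\<^esub>"])
  next
    show "sym (reid_rel H \<phi>)"
    proof (rule symI)
      fix a b assume "(a, b) \<in> reid_rel H \<phi>"
      then obtain g where g: "a \<in> carrier H" "b \<in> carrier H" "g \<in> carrier H"
        and b: "b = g \<otimes>\<^bsub>H\<^esub> a \<otimes>\<^bsub>H\<^esub> \<phi> (inv\<^bsub>H\<^esub> g)"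
        by (auto simp: reid_rel_def)
      have "a = inv\<^bsub>H\<^esub> g \<otimes>\<^bsub>H\<^esub> b \<otimes>\<^bsub>H\<^esub> \<phi> (inv\<^bsub>H\<^esub> (inv\<^bsub>H\<^esub> g))"
        using g by (simp add: b H.m_assoc flip: h.hom_mult) (simp add: H.m_assoc[symmetric])
      then show "(b, a) \<in> reid_rel H \<phi>"
        using g unfolding reid_rel_def by (auto intro!: bexI[of _ "inv\<^bsub>H\<^esub> g"])
    qed
  next
    show "trans (reid_rel H \<phi>)"
    proof (rule transI)
      fix a b c assume "(a, b) \<in> reid_rel H \<phi>" "(b, c) \<in> reid_rel H \<phi>"
      then obtain g h where gh: "a \<in> carrier H" "g \<in> carrier H" "h \<in> carrier H" "c \<in> carrier H"
        and b: "b = g \<otimes>\<^bsub>H\<^esub> a \<otimes>\<^bsub>H\<^esub> \<phi> (inv\<^bsub>H\<^esub> g)"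
        and c: "c = h \<otimes>\<^bsub>H\<^esub> b \<otimes>\<^bsub>H\<^esub> \<phi> (inv\<^bsub>H\<^esub> h)"
        by (auto simp: reid_rel_def)
      have "c = (h \<otimes>\<^bsub>H\<^esub> g) \<otimes>\<^bsub>H\<^esub> a \<otimes>\<^bsub>H\<^esub> \<phi> (inv\<^bsub>H\<^esub> (h \<otimes>\<^bsub>H\<^esub> g))"
        using gh by (simp add: b c H.m_assoc H.inv_mult_group)
      then show "(a, c) \<in> reid_rel H \<phi>"
        using gh unfolding reid_rel_def by (auto intro!: bexI[of _ "h \<otimes>\<^bsub>H\<^esub> g"])
    qed
  qed (auto simp: reid_rel_def)
qed

lemma reid_relI:
  assumes "x \<in> carrier H" "g \<in> carrier H" "y = g \<otimes>\<^bsub>H\<^esub> x \<otimes>\<^bsub>H\<^esub> \<phi> (inv\<^bsub>H\<^esub> g)" "y \<in> carrier H"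
  shows "(x, y) \<in> reid_rel H \<phi>"
  using assms by (auto simp: reid_rel_def)

lemma finite_reidemeisterI:
  assumes "group H" and "\<phi> \<in> hom H H" and "finite S"
    and "\<And>a. a \<in> carrier H \<Longrightarrow> \<exists>s\<in>S. (a, s) \<in> reid_rel H \<phi>"
  shows "finite_reidemeister H \<phi>"
proof -
  let ?R = "reid_rel H \<phi>"
  have eq: "equiv (carrier H) ?R" using equiv_reid_rel[OF assms(1,2)] .
  have "carrier H // ?R \<subseteq> (\<lambda>s. ?R `` {s}) ` S"
  proof
    fix C assume "C \<in> carrier H // ?R"
    then obtain a where a: "a \<in> carrier H" and C: "C = ?R `` {a}" by (auto elim: quotientE)
    then obtain s where "s \<in> S" "(a, s) \<in> ?R" using assms(4) by blast
    then show "C \<in> (\<lambda>s. ?R `` {s}) ` S"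
      using C eq by (auto simp: equiv_class_eq)
  qed
  then show ?thesis
    unfolding finite_reidemeister_def using assms(3) by (auto intro: finite_subset)
qed

lemma funpow_hom: "f \<in> hom G G \<Longrightarrow> f ^^ n \<in> hom G G"
proof (induction n)
  case 0
  then show ?case by (simp add: hom_def)
next
  case (Suc n)
  then show ?case using hom_compose[of "f ^^ n" G G f G] by (simp only: funpow.simps)
qed

lemma hom_finprod:
  assumes "comm_group G" "comm_group H" "h \<in> hom G H" "f \<in> A \<rightarrow> carrier G"
  shows "h (finprod G f A) = finprod H (h \<circ> f) A"
proof -
  interpret G: comm_group G by (rule assms(1))
  interpret H: comm_group H by (rule assms(2))
  interpret h: group_hom G H h by (simp add: assms group_hom_def group_hom_axioms_def)
  show ?thesis
  proof (cases "finite A")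
    case True
    from this assms(4) show ?thesis
      by (induction A rule: finite_induct) (auto simp: Pi_iff)
  qed (simp add: finprod_def)
qed

lemma (in comm_group) finprod_shift_quotient:
  assumes "\<And>j. a j \<in> carrier G"
  shows "(\<Otimes>j\<in>{..<m}. a j) \<otimes> inv (\<Otimes>j\<in>{..<m}. a (Suc j)) = a 0 \<otimes> inv a m"
proof (induction m)
  case 0
  then show ?case using assms by simp
next
  case (Suc m)
  let ?P = "\<Otimes>j\<in>{..<m}. a j" and ?Q = "\<Otimes>j\<in>{..<m}. a (Suc j)"
  have PQ: "?P \<in> carrier G" "?Q \<in> carrier G" using assms by (auto intro: finprod_closed)
  have "(\<Otimes>j\<in>{..<Suc m}. a j) \<otimes> inv (\<Otimes>j\<in>{..<Suc m}. a (Suc j))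
      = (?P \<otimes> inv ?Q) \<otimes> (a m \<otimes> inv a (Suc m))"
    using assms PQ by (simp add: lessThan_Suc inv_mult m_ac)
  also have "\<dots> = a 0 \<otimes> inv a (Suc m)"
    using assms by (simp add: Suc m_assoc[symmetric]) (simp add: m_assoc)
  finally show ?case .
qed

lemma (in comm_group) finprod_orbit_quotient:
  assumes "\<chi> \<in> hom G G" and "\<And>z. c z \<in> carrier G" and "(B ^^ m) z = z"
  shows "(\<Otimes>j\<in>{..<m}. (\<chi> ^^ j) (c ((B ^^ j) z)))
           \<otimes> inv \<chi> (\<Otimes>j\<in>{..<m}. (\<chi> ^^ j) (c ((B ^^ j) (B z))))
         = c z \<otimes> inv (\<chi> ^^ m) (c z)"
proof -
  let ?a = "\<lambda>j. (\<chi> ^^ j) (c ((B ^^ j) z))"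
  have closed: "(\<chi> ^^ j) g \<in> carrier G" if "g \<in> carrier G" for g j
    using funpow_hom[OF assms(1)] that by (auto simp: hom_def)
  have "\<chi> (\<Otimes>j\<in>{..<m}. (\<chi> ^^ j) (c ((B ^^ j) (B z))))
      = (\<Otimes>j\<in>{..<m}. \<chi> ((\<chi> ^^ j) (c ((B ^^ j) (B z)))))"
    by (subst hom_finprod[OF comm_group_axioms comm_group_axioms assms(1)])
      (auto simp: closed assms(2) comp_def)
  also have "\<dots> = (\<Otimes>j\<in>{..<m}. ?a (Suc j))"
    by (simp add: funpow_swap1)
  finally have "(\<Otimes>j\<in>{..<m}. ?a j) \<otimes> inv \<chi> (\<Otimes>j\<in>{..<m}. (\<chi> ^^ j) (c ((B ^^ j) (B z))))
      = ?a 0 \<otimes> inv ?a m"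
    using finprod_shift_quotient[of ?a m] closed assms(2) by simp
  then show ?thesis using assms(3) by simp
qed

lemma (in comm_group) bij_lang_map:
  assumes "finite (carrier G)" "\<chi> \<in> hom G G"
    and "\<And>g. g \<in> carrier G \<Longrightarrow> \<chi> g = g \<Longrightarrow> g = \<one>"
  shows "bij_betw (\<lambda>a. a \<otimes> inv \<chi> a) (carrier G) (carrier G)"
proof -
  interpret \<chi>: group_hom G G \<chi> by (simp add: assms group_hom_def group_hom_axioms_def)
  have hom: "(\<lambda>a. a \<otimes> inv \<chi> a) \<in> hom G G"
    by (rule homI) (simp_all add: inv_mult m_ac)
  interpret L: group_hom G G "\<lambda>a. a \<otimes> inv \<chi> a"
    by (simp add: hom group_hom_def group_hom_axioms_def)
  have "a = \<one>" if "a \<in> carrier G" "a \<otimes> inv \<chi> a = \<one>" for a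
    using that assms(3) inv_equality[of a "inv \<chi> a"] by simp
  then have "kernel G G (\<lambda>a. a \<otimes> inv \<chi> a) = {\<one>}"
    by (auto simp: kernel_def)
  then have inj: "inj_on (\<lambda>a. a \<otimes> inv \<chi> a) (carrier G)"
    using L.inj_iff_trivial_ker by simp
  moreover have "(\<lambda>a. a \<otimes> inv \<chi> a) ` carrier G \<subseteq> carrier G"
    by auto
  ultimately show ?thesis
    using endo_inj_surj[OF assms(1)] by (simp add: bij_betw_def)
qed

definition fpf_power_aut :: "('a, 'b) monoid_scheme \<Rightarrow> nat \<Rightarrow> ('a \<Rightarrow> 'a) \<Rightarrow> bool" where
  "fpf_power_aut G m \<psi> \<longleftrightarrow> \<psi> \<in> iso G G \<and> (\<forall>g\<in>carrier G. (\<psi> ^^ m) g = g \<longrightarrow> g = \<one>\<^bsub>G\<^esub>)"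

lemma fpf_power_aut_iso_transfer:
  assumes "group G" "group H" "G \<cong> H" and fpf: "fpf_power_aut H m \<psi>"
  shows "\<exists>\<chi>. fpf_power_aut G m \<chi>"
proof -
  interpret G: group G by (rule assms(1))
  interpret H: group H by (rule assms(2))
  obtain h where h: "h \<in> iso G H" using assms(3) by (auto simp: is_iso_def)
  let ?h' = "inv_into (carrier G) h"
  have hom: "h \<in> hom G H" and bij: "bij_betw h (carrier G) (carrier H)"
    using h by (simp_all add: iso_def)
  have \<psi>_pow_closed: "(\<psi> ^^ j) y \<in> carrier H" if "y \<in> carrier H" for y j
    using funpow_hom[of \<psi> H j] fpf that by (auto simp: fpf_power_aut_def iso_def hom_def)
  define \<chi> where "\<chi> = ?h' \<circ> \<psi> \<circ> h"
  have "\<chi> \<in> iso G G"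
    unfolding \<chi>_def using fpf iso_set_trans[OF iso_set_trans[OF h] G.iso_set_sym[OF h]]
    by (simp add: fpf_power_aut_def comp_assoc)
  moreover have \<chi>_pow: "(\<chi> ^^ j) g = ?h' ((\<psi> ^^ j) (h g))" if "g \<in> carrier G" for g j
  proof (induction j)
    case 0
    then show ?case using bij that by (simp add: bij_betw_inv_into_left)
  next
    case (Suc j)
    have "h g \<in> carrier H" using hom that by (simp add: hom_in_carrier)
    then show ?case
      using Suc bij \<psi>_pow_closed by (simp add: \<chi>_def bij_betw_inv_into_right)
  qed
  have "g = \<one>\<^bsub>G\<^esub>" if g: "g \<in> carrier G" and fixed: "(\<chi> ^^ m) g = g" for g
  proof -
    have hg: "h g \<in> carrier H" using hom g by (simp add: hom_in_carrier)
    have "(\<psi> ^^ m) (h g) = h g"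
      using arg_cong[OF fixed, of h] \<chi>_pow[OF g] bij \<psi>_pow_closed[OF hg]
      by (simp add: bij_betw_inv_into_right)
    then have "h g = h \<one>\<^bsub>G\<^esub>"
      using fpf hg hom by (simp add: fpf_power_aut_def hom_one)
    then show ?thesis
      using bij g by (metis G.one_closed bij_betw_imp_inj_on inj_onD)
  qed
  ultimately show ?thesis
    unfolding fpf_power_aut_def by blast
qed

lemma sum_fun_apply: "(\<Sum>j\<in>A. f j) x = (\<Sum>j\<in>A. f j x)"
  by (induction A rule: infinite_finite_induct) simp_all

lemma additive_funpow:
  fixes f :: "'a::ab_group_add \<Rightarrow> 'a"
  shows "additive f \<Longrightarrow> additive (f ^^ n)"
  by (induction n) (simp_all add: additive_def)

lemma additive_int_mult:
  fixes f :: "('a \<Rightarrow> int) \<Rightarrow> 'b \<Rightarrow> int"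
  assumes "additive f"
  shows "f (\<lambda>i. c * u i) = (\<lambda>i. c * f u i)"
proof -
  interpret additive f by (rule assms)
  have nat: "f (\<lambda>i. int n * u i) = (\<lambda>i. int n * f u i)" for n
  proof (induction n)
    case 0
    then show ?case using zero by (simp add: zero_fun_def)
  next
    case (Suc n)
    have "(\<lambda>i. int (Suc n) * u i) = u + (\<lambda>i. int n * u i)"
      by (simp add: fun_eq_iff algebra_simps)
    then show ?case using Suc by (simp only: add) (simp add: fun_eq_iff algebra_simps)
  qed
  show ?thesis
  proof (cases "0 \<le> c")
    case True
    then show ?thesis using nat[of "nat c"] by simp
  next
    case False
    then have "(\<lambda>i. c * u i) = - (\<lambda>i. int (nat (- c)) * u i)"
      by (simp add: fun_eq_iff)
    then have "f (\<lambda>i. c * u i) = - f (\<lambda>i. int (nat (- c)) * u i)"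
      by (simp only: minus)
    then show ?thesis using nat[of "nat (- c)"] False by (simp add: fun_eq_iff)
  qed
qed

definition Zk_linear :: "nat \<Rightarrow> ((nat \<Rightarrow> int) \<Rightarrow> nat \<Rightarrow> int) \<Rightarrow> bool" where
  "Zk_linear k L \<longleftrightarrow> additive L \<and> (\<forall>u. L u \<in> Zk k)"

lemma Zk_linear_funpow_Zk: "Zk_linear k L \<Longrightarrow> v \<in> Zk k \<Longrightarrow> (L ^^ j) v \<in> Zk k"
  by (cases j) (auto simp: Zk_linear_def)

definition vanishing_norm :: "nat \<Rightarrow> nat \<Rightarrow> ((nat \<Rightarrow> int) \<Rightarrow> nat \<Rightarrow> int) \<Rightarrow> bool" where
  "vanishing_norm k m M \<longleftrightarrow> Zk_linear k M \<and> (\<forall>v\<in>Zk k. (\<Sum>j<m. (M ^^ j) v) = 0)"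

lemma vanishing_norm_funpow:
  assumes "vanishing_norm k m M" and "v \<in> Zk k"
  shows "(M ^^ m) v = v"
proof -
  interpret additive M using assms(1) by (simp add: vanishing_norm_def Zk_linear_def)
  have norm: "(\<Sum>j<m. (M ^^ j) v) = 0" using assms by (simp add: vanishing_norm_def)
  have "(\<Sum>j<m. (M ^^ Suc j) v) = M (\<Sum>j<m. (M ^^ j) v)" by (simp add: sum)
  then have shifted: "(\<Sum>j<m. (M ^^ Suc j) v) = 0" by (simp add: norm zero)
  have "v + (\<Sum>j<m. (M ^^ Suc j) v) = (\<Sum>j<Suc m. (M ^^ j) v)"
    by (subst sum.lessThan_Suc_shift) simp
  also have "\<dots> = (\<Sum>j<m. (M ^^ j) v) + (M ^^ m) v"
    by (rule sum.lessThan_Suc)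
  finally show ?thesis by (simp only: shifted norm add_0 add_0_right)
qed

lemma weighted_sum_telescope:
  fixes a :: "nat \<Rightarrow> 'a::comm_ring_1"
  shows "(\<Sum>j<n. of_nat (Suc j) * a j) - (\<Sum>j<n. of_nat (Suc j) * a (Suc j))
         = (\<Sum>j<n. a j) - of_nat n * a n"
  by (induction n) (simp_all add: algebra_simps)

lemma finite_Zk_box: "finite {v \<in> Zk k. \<forall>i. 0 \<le> v i \<and> v i < b}"
proof -
  have "{v \<in> Zk k. \<forall>i. 0 \<le> v i \<and> v i < b}
          \<subseteq> (\<lambda>g i. if i < k then g i else 0) ` ({..<k} \<rightarrow>\<^sub>E {0..<b})"
  proof
    fix v assume v: "v \<in> {v \<in> Zk k. \<forall>i. 0 \<le> v i \<and> v i < b}"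
    then have "v = (\<lambda>i. if i < k then restrict v {..<k} i else 0)"
      by (auto simp: Zk_def fun_eq_iff)
    moreover have "restrict v {..<k} \<in> {..<k} \<rightarrow>\<^sub>E {0..<b}"
      using v by auto
    ultimately show "v \<in> (\<lambda>g i. if i < k then g i else 0) ` ({..<k} \<rightarrow>\<^sub>E {0..<b})"
      by blast
  qed
  then show ?thesis by (rule finite_subset) (simp add: finite_PiE)
qed

section \<open>The twisted automorphism of G wr Z^k\<close>

locale wreath_twist = comm_group G for G (structure) +
  fixes k m :: nat and \<psi> :: "'a \<Rightarrow> 'a" and M :: "(nat \<Rightarrow> int) \<Rightarrow> nat \<Rightarrow> int"
  assumes finite_carrier: "finite (carrier G)"
    and m_pos: "0 < m"
    and fpf_psi: "fpf_power_aut G m \<psi>"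
    and norm_M: "vanishing_norm k m M"
begin

abbreviation W where "W \<equiv> wreath_Zk G k"

lemma group_hom_psi_pow: "group_hom G G (\<psi> ^^ j)"
  using fpf_psi funpow_hom
  by (auto simp: fpf_power_aut_def iso_def group_hom_def group_hom_axioms_def)

lemma psi_pow_closed [simp]: "a \<in> carrier G \<Longrightarrow> (\<psi> ^^ j) a \<in> carrier G"
  using group_hom.hom_closed[OF group_hom_psi_pow] .

lemma psi_pow_one [simp]: "(\<psi> ^^ j) \<one> = \<one>"
  using group_hom.hom_one[OF group_hom_psi_pow] .

lemma psi_pow_inv [simp]: "a \<in> carrier G \<Longrightarrow> (\<psi> ^^ j) (inv a) = inv (\<psi> ^^ j) a"
  using group_hom.hom_inv[OF group_hom_psi_pow] by simp

lemma psi_closed [simp]: "a \<in> carrier G \<Longrightarrow> \<psi> a \<in> carrier G"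
  using psi_pow_closed[of a 1] by simp

lemma psi_one [simp]: "\<psi> \<one> = \<one>"
  using psi_pow_one[of 1] by simp

lemma psi_mult [simp]: "a \<in> carrier G \<Longrightarrow> b \<in> carrier G \<Longrightarrow> \<psi> (a \<otimes> b) = \<psi> a \<otimes> \<psi> b"
  using group_hom.hom_mult[OF group_hom_psi_pow, of a b 1] by simp

lemma psi_inv [simp]: "a \<in> carrier G \<Longrightarrow> \<psi> (inv a) = inv \<psi> a"
  using psi_pow_inv[of a 1] by simp

lemma psi_hom: "\<psi> \<in> hom G G"
  using fpf_psi by (simp add: fpf_power_aut_def iso_def)

lemma bij_psi: "bij_betw \<psi> (carrier G) (carrier G)"
  using fpf_psi by (simp add: fpf_power_aut_def iso_def)

lemma additive_M: "additive M"
  using norm_M by (simp add: vanishing_norm_def Zk_linear_def)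

lemma M_Zk [simp]: "M v \<in> Zk k"
  using norm_M by (simp add: vanishing_norm_def Zk_linear_def)

lemma M_add: "M (u + v) = M u + M v"
  using additive.add[OF additive_M] .

lemma M_minus: "M (- v) = - M v"
  using additive.minus[OF additive_M] .

lemma M_zero [simp]: "M 0 = 0"
  using additive.zero[OF additive_M] .

lemma M_pow_Zk: "v \<in> Zk k \<Longrightarrow> (M ^^ j) v \<in> Zk k"
  by (cases j) simp_all

lemma M_pow_m: "v \<in> Zk k \<Longrightarrow> (M ^^ m) v = v"
  using vanishing_norm_funpow[OF norm_M] .

lemma M_norm: "v \<in> Zk k \<Longrightarrow> (\<Sum>j<m. (M ^^ j) v) = 0"
  using norm_M by (simp add: vanishing_norm_def)

definition M_inv :: "(nat \<Rightarrow> int) \<Rightarrow> nat \<Rightarrow> int" where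
  "M_inv = M ^^ (m - 1)"

lemma M_M_inv: "v \<in> Zk k \<Longrightarrow> M (M_inv v) = v"
  using M_pow_m m_pos by (metis M_inv_def Suc_diff_1 comp_apply funpow.simps(2))

lemma M_inv_M: "v \<in> Zk k \<Longrightarrow> M_inv (M v) = v"
  using M_pow_m m_pos by (metis M_inv_def Suc_diff_1 comp_apply funpow_Suc_right)

lemma M_inv_Zk: "v \<in> Zk k \<Longrightarrow> M_inv v \<in> Zk k"
  by (simp add: M_inv_def M_pow_Zk)

lemma M_inv_diff: "M_inv (u - v) = M_inv u - M_inv v"
  unfolding M_inv_def using additive.diff[OF additive_funpow[OF additive_M]] .

definition twist :: "((nat \<Rightarrow> int) \<Rightarrow> 'a) \<times> (nat \<Rightarrow> int) \<Rightarrow> ((nat \<Rightarrow> int) \<Rightarrow> 'a) \<times> (nat \<Rightarrow> int)"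
  where "twist = (\<lambda>(f, x). (\<lambda>z. if z \<in> Zk k then \<psi> (f (M_inv z)) else \<one>, M x))"

lemma twist_closed:
  assumes "a \<in> carrier W"
  shows "twist a \<in> carrier W"
proof -
  obtain f x where a: "a = (f, x)" by fastforce
  have f: "x \<in> Zk k" "\<And>z. f z \<in> carrier G" "finite {z. f z \<noteq> \<one>}"
    using assms by (auto simp: a carrier_wreath_Zk)
  have "{z. (if z \<in> Zk k then \<psi> (f (M_inv z)) else \<one>) \<noteq> \<one>} \<subseteq> M ` {w. f w \<noteq> \<one>}"
    by (auto simp: image_iff) (metis M_M_inv psi_one)
  then have "finite {z. (if z \<in> Zk k then \<psi> (f (M_inv z)) else \<one>) \<noteq> \<one>}"
    using f(3) by (rule finite_subset[OF _ finite_imageI])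
  then show ?thesis
    using f by (simp add: a twist_def carrier_wreath_Zk)
qed

lemma twist_hom: "twist \<in> hom W W"
proof (rule homI)
  fix a b assume ab: "a \<in> carrier W" "b \<in> carrier W"
  obtain f x g y where a: "a = (f, x)" and b: "b = (g, y)" by fastforce
  have fg: "x \<in> Zk k" "y \<in> Zk k" "\<And>z. f z \<in> carrier G" "\<And>z. g z \<in> carrier G"
    "\<And>z. z \<notin> Zk k \<Longrightarrow> g z = \<one>"
    using ab by (auto simp: a b carrier_wreath_Zk)
  have "M_inv (z - M x) = M_inv z - x" for z
    using fg(1) by (simp add: M_inv_diff M_inv_M)
  then show "twist (a \<otimes>\<^bsub>W\<^esub> b) = twist a \<otimes>\<^bsub>W\<^esub> twist b"
    using fg by (auto simp: a b twist_def M_add Zk_diff_iff M_inv_Zk)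
qed (rule twist_closed)

lemma twist_surj: "carrier W \<subseteq> twist ` carrier W"
proof
  fix b assume b: "b \<in> carrier W"
  obtain g y where b_eq: "b = (g, y)" by fastforce
  have g: "y \<in> Zk k" "\<And>z. g z \<in> carrier G" "\<And>z. z \<notin> Zk k \<Longrightarrow> g z = \<one>" "finite {z. g z \<noteq> \<one>}"
    using b by (auto simp: b_eq carrier_wreath_Zk)
  let ?\<psi>' = "inv_into (carrier G) \<psi>"
  have \<psi>': "?\<psi>' c \<in> carrier G" "\<psi> (?\<psi>' c) = c" if "c \<in> carrier G" for c
    using bij_psi that by (auto simp: bij_betw_def inv_into_into f_inv_into_f)
  have \<psi>'_one: "?\<psi>' \<one> = \<one>"
    using bij_psi by (metis bij_betw_inv_into_left one_closed psi_one)
  let ?a = "(\<lambda>z. if z \<in> Zk k then ?\<psi>' (g (M z)) else \<one>, M_inv y)"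
  have "{z. (if z \<in> Zk k then ?\<psi>' (g (M z)) else \<one>) \<noteq> \<one>} \<subseteq> M_inv ` {w. g w \<noteq> \<one>}"
    using \<psi>'_one by (auto simp: image_iff) (metis M_inv_M)
  then have "finite {z. (if z \<in> Zk k then ?\<psi>' (g (M z)) else \<one>) \<noteq> \<one>}"
    using g(4) by (rule finite_subset[OF _ finite_imageI])
  then have "?a \<in> carrier W"
    using g \<psi>' by (simp add: carrier_wreath_Zk M_inv_Zk)
  moreover have "twist ?a = b"
    using g \<psi>' by (auto simp: b_eq twist_def fun_eq_iff M_inv_Zk M_M_inv)
  ultimately show "b \<in> twist ` carrier W" by blast
qed

lemma twist_iso: "twist \<in> iso W W"
proof -
  interpret W: group W by (rule group_wreath_Zk)
  interpret tw: group_hom W W twist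
    by (simp add: group_hom_def group_hom_axioms_def twist_hom)
  have "a = \<one>\<^bsub>W\<^esub>" if "a \<in> carrier W" "twist a = \<one>\<^bsub>W\<^esub>" for a
  proof -
    obtain f x where a: "a = (f, x)" by fastforce
    have f: "x \<in> Zk k" "\<And>z. f z \<in> carrier G" "\<And>z. z \<notin> Zk k \<Longrightarrow> f z = \<one>"
      using that by (auto simp: a carrier_wreath_Zk)
    have Mx: "M x = 0" and \<psi>f: "\<And>z. z \<in> Zk k \<Longrightarrow> \<psi> (f (M_inv z)) = \<one>"
      using that by (auto simp: a twist_def fun_eq_iff zero_fun_def split: if_splits)
    have "x = 0"
      using M_inv_M[OF f(1)] M_inv_diff[of 0 0] Mx by simp
    moreover have "f w = \<one>" for w
    proof (cases "w \<in> Zk k")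
      case True
      then have "\<psi> (f w) = \<one>" using \<psi>f[of "M w"] by (simp add: M_inv_M)
      then show ?thesis using bij_psi f(2)[of w]
        by (metis bij_betw_def inj_onD one_closed psi_one)
    qed (simp add: f(3))
    ultimately show ?thesis by (simp add: a fun_eq_iff)
  qed
  then have "kernel W W twist = {\<one>\<^bsub>W\<^esub>}"
    using tw.hom_one by (auto simp: kernel_def simp del: one_wreath_Zk)
  then have "inj_on twist (carrier W)"
    by (simp add: tw.inj_iff_trivial_ker)
  then show ?thesis
    using twist_surj twist_closed by (auto simp: iso_def bij_betw_def)
qed

definition affine_inv :: "(nat \<Rightarrow> int) \<Rightarrow> (nat \<Rightarrow> int) \<Rightarrow> nat \<Rightarrow> int" where
  "affine_inv x z = M_inv (z - x)"

lemma affine_inv_Zk: "x \<in> Zk k \<Longrightarrow> z \<in> Zk k \<Longrightarrow> affine_inv x z \<in> Zk k"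
  by (simp add: affine_inv_def M_inv_Zk Zk_diff)

lemma affine_inv_pow_Zk: "x \<in> Zk k \<Longrightarrow> z \<in> Zk k \<Longrightarrow> (affine_inv x ^^ j) z \<in> Zk k"
  by (induction j) (simp_all add: affine_inv_Zk)

lemma affine_inv_pow_m:
  assumes x: "x \<in> Zk k" and z: "z \<in> Zk k"
  shows "(affine_inv x ^^ m) z = z"
proof -
  define A where "A w = M w + x" for w
  have A_pow: "(A ^^ j) w = (M ^^ j) w + (\<Sum>t<j. (M ^^ t) x)" for j w
  proof (induction j)
    case (Suc j)
    have "(A ^^ Suc j) w = M ((M ^^ j) w + (\<Sum>t<j. (M ^^ t) x)) + x"
      by (simp only: funpow.simps comp_apply Suc A_def)
    also have "\<dots> = (M ^^ Suc j) w + (\<Sum>t<Suc j. (M ^^ t) x)"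
      by (simp add: M_add additive.sum[OF additive_M] sum.lessThan_Suc_shift add_ac
          del: sum.lessThan_Suc)
    finally show ?case .
  qed simp
  have A_inv: "A (affine_inv x w) = w" if "w \<in> Zk k" for w
    using that x by (simp add: A_def affine_inv_def M_M_inv Zk_diff)
  have "(A ^^ j) ((affine_inv x ^^ j) z) = z" for j
  proof (induction j)
    case (Suc j)
    have "(A ^^ Suc j) ((affine_inv x ^^ Suc j) z)
        = (A ^^ j) (A (affine_inv x ((affine_inv x ^^ j) z)))"
      by (simp add: funpow_swap1)
    then show ?case using Suc A_inv affine_inv_pow_Zk[OF x z] by simp
  qed simp
  moreover have "(A ^^ m) w = w" if "w \<in> Zk k" for w
    using that M_pow_m M_norm[OF x] by (simp add: A_pow)
  ultimately show ?thesis
    using affine_inv_pow_Zk[OF x z] by metis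
qed

lemma inj_on_affine_inv_pow: "x \<in> Zk k \<Longrightarrow> inj_on (affine_inv x ^^ j) (Zk k)"
proof (induction j)
  case (Suc j)
  have "inj_on (affine_inv x) (Zk k)"
    by (rule inj_on_inverseI[where g = "\<lambda>w. M w + x"])
      (use Suc.prems in \<open>simp add: affine_inv_def M_M_inv Zk_diff\<close>)
  then have "inj_on (affine_inv x) ((affine_inv x ^^ j) ` Zk k)"
    by (rule inj_on_subset) (auto simp: affine_inv_pow_Zk Suc.prems)
  then show ?case
    using comp_inj_on[OF Suc.IH[OF Suc.prems]] by (simp only: funpow.simps)
qed simp

lemma exists_lang_preimage:
  assumes "\<And>z. h z \<in> carrier G"
  shows "\<exists>c. (\<forall>z. c z \<in> carrier G \<and> c z \<otimes> inv (\<psi> ^^ m) (c z) = h z \<and> (h z = \<one> \<longrightarrow> c z = \<one>))"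
proof -
  let ?L = "\<lambda>a. a \<otimes> inv (\<psi> ^^ m) a"
  have bij: "bij_betw ?L (carrier G) (carrier G)"
    using bij_lang_map[OF finite_carrier group_hom.homh[OF group_hom_psi_pow]] fpf_psi
    by (simp add: fpf_power_aut_def)
  define c where "c z = inv_into (carrier G) ?L (h z)" for z
  have "c z \<in> carrier G" for z
    using bij_betwE[OF bij_betw_inv_into[OF bij]] assms by (simp add: c_def)
  moreover have "?L (c z) = h z" for z
    using bij_betw_inv_into_right[OF bij assms] by (simp add: c_def)
  moreover have "c z = \<one>" if "h z = \<one>" for z
    using bij_betw_inv_into_left[OF bij one_closed] that by (simp add: c_def)
  ultimately show ?thesis by blast
qed

lemma exists_base_solution:
  assumes x: "x \<in> Zk k" and f: "\<And>z. f z \<in> carrier G" "finite {z. f z \<noteq> \<one>}"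
  shows "\<exists>\<gamma>. (\<gamma>, 0) \<in> carrier W \<and> (\<forall>z\<in>Zk k. \<gamma> z \<otimes> inv \<psi> (\<gamma> (affine_inv x z)) = inv (f z))"
proof -
  obtain c where c: "\<And>z. c z \<in> carrier G" "\<And>z. c z \<otimes> inv (\<psi> ^^ m) (c z) = inv (f z)"
      "\<And>z. f z = \<one> \<Longrightarrow> c z = \<one>"
    using exists_lang_preimage[of "\<lambda>z. inv (f z)"] f(1) by (metis inv_one inv_closed)
  let ?B = "affine_inv x"
  \<comment> \<open>the norm of \<open>c\<close> along the orbit of \<open>w\<close> under \<open>?B\<close>, which has period \<open>m\<close>\<close>
  define \<gamma> where
    "\<gamma> w = (if w \<in> Zk k then \<Otimes>j\<in>{..<m}. (\<psi> ^^ j) (c ((?B ^^ j) w)) else \<one>)" for w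
  have "{w. \<gamma> w \<noteq> \<one>} \<subseteq> (\<Union>j<m. (?B ^^ j) -` {z. f z \<noteq> \<one>} \<inter> Zk k)"
  proof
    fix w assume "w \<in> {w. \<gamma> w \<noteq> \<one>}"
    then have w: "w \<in> Zk k" "(\<Otimes>j\<in>{..<m}. (\<psi> ^^ j) (c ((?B ^^ j) w))) \<noteq> \<one>"
      by (auto simp: \<gamma>_def split: if_splits)
    then have "\<exists>j<m. (\<psi> ^^ j) (c ((?B ^^ j) w)) \<noteq> \<one>"
      using finprod_one_eqI[of "{..<m}" "\<lambda>j. (\<psi> ^^ j) (c ((?B ^^ j) w))"] by auto
    then obtain j where "j < m" "f ((?B ^^ j) w) \<noteq> \<one>"
      using c(3) by (metis psi_pow_one)
    then show "w \<in> (\<Union>j<m. (?B ^^ j) -` {z. f z \<noteq> \<one>} \<inter> Zk k)"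
      using w(1) by blast
  qed
  moreover have "finite (\<Union>j<m. (?B ^^ j) -` {z. f z \<noteq> \<one>} \<inter> Zk k)"
    using finite_vimage_IntI[OF f(2) inj_on_affine_inv_pow[OF x]] by blast
  ultimately have "finite {w. \<gamma> w \<noteq> \<one>}"
    by (rule finite_subset)
  then have "(\<gamma>, 0) \<in> carrier W"
    by (auto simp: carrier_wreath_Zk \<gamma>_def c(1) Pi_iff)
  moreover have "\<gamma> z \<otimes> inv \<psi> (\<gamma> (?B z)) = inv (f z)" if "z \<in> Zk k" for z
    using finprod_orbit_quotient[OF psi_hom c(1) affine_inv_pow_m[OF x that]] c(2)
      affine_inv_Zk[OF x that] that
    by (simp add: \<gamma>_def)
  ultimately show ?thesis by blast
qed

lemma reid_rel_base_to_one:
  assumes a: "(f, x) \<in> carrier W"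
  shows "((f, x), (\<lambda>z. \<one>, x)) \<in> reid_rel W twist"
proof -
  have f: "x \<in> Zk k" "\<And>z. f z \<in> carrier G" "\<And>z. z \<notin> Zk k \<Longrightarrow> f z = \<one>" "finite {z. f z \<noteq> \<one>}"
    using a by (auto simp: carrier_wreath_Zk)
  obtain \<gamma> where \<gamma>: "(\<gamma>, 0) \<in> carrier W"
      "\<And>z. z \<in> Zk k \<Longrightarrow> \<gamma> z \<otimes> inv \<psi> (\<gamma> (affine_inv x z)) = inv (f z)"
    using exists_base_solution[OF f(1,2,4)] by blast
  have \<gamma>_closed: "\<And>z. \<gamma> z \<in> carrier G" and \<gamma>_out: "\<And>z. z \<notin> Zk k \<Longrightarrow> \<gamma> z = \<one>"
    using \<gamma>(1) by (auto simp: carrier_wreath_Zk)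
  have "\<gamma> z \<otimes> f z \<otimes> (if z - x \<in> Zk k then \<psi> (inv \<gamma> (M_inv (z - x))) else \<one>) = \<one>" for z
  proof (cases "z \<in> Zk k")
    case True
    then have "\<gamma> z \<otimes> f z \<otimes> (if z - x \<in> Zk k then \<psi> (inv \<gamma> (M_inv (z - x))) else \<one>)
        = f z \<otimes> (\<gamma> z \<otimes> inv \<psi> (\<gamma> (affine_inv x z)))"
      using f(1,2) \<gamma>_closed by (simp add: Zk_diff_iff affine_inv_def m_ac)
    then show ?thesis using \<gamma>(2)[OF True] f(2) by simp
  next
    case False
    then show ?thesis using f \<gamma>_out by (simp add: Zk_diff_iff)
  qed
  then have "(\<lambda>z. \<one>, x) = (\<gamma>, 0) \<otimes>\<^bsub>W\<^esub> (f, x) \<otimes>\<^bsub>W\<^esub> twist (inv\<^bsub>W\<^esub> (\<gamma>, 0))"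
    by (simp add: inv_wreath_Zk[OF \<gamma>(1)] twist_def)
  moreover have "(\<lambda>z. \<one>, x) \<in> carrier W"
    using f(1) by (simp add: carrier_wreath_Zk)
  ultimately show ?thesis
    by (rule reid_relI[OF a \<gamma>(1)])
qed

lemma reid_rel_translation:
  assumes x: "x \<in> Zk k" and y: "y \<in> Zk k"
  shows "((\<lambda>z. \<one>, x), (\<lambda>z. \<one>, y + x - M y)) \<in> reid_rel W twist"
proof -
  have c: "(\<lambda>z. \<one>, y) \<in> carrier W" "(\<lambda>z. \<one>, x) \<in> carrier W" "(\<lambda>z. \<one>, y + x - M y) \<in> carrier W"
    using x y by (simp_all add: carrier_wreath_Zk Zk_add Zk_diff)
  have "(\<lambda>z. \<one>, y + x - M y)
      = (\<lambda>z. \<one>, y) \<otimes>\<^bsub>W\<^esub> (\<lambda>z. \<one>, x) \<otimes>\<^bsub>W\<^esub> twist (inv\<^bsub>W\<^esub> (\<lambda>z. \<one>, y))"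
    by (simp add: inv_wreath_Zk[OF c(1)] twist_def M_minus fun_eq_iff)
  then show ?thesis
    using c(3) by (rule reid_relI[OF c(2,1)])
qed

lemma exists_reduced_translation:
  assumes x: "x \<in> Zk k"
  shows "\<exists>y\<in>Zk k. y + x - M y \<in> {v \<in> Zk k. \<forall>i. 0 \<le> v i \<and> v i < int m}"
proof -
  define q where "q i = x i div int m" for i
  have q: "q \<in> Zk k" using x by (simp add: Zk_def q_def)
  define y where "y = (\<Sum>j<m. (\<lambda>i. int (Suc j) * (M ^^ j) q i))"
  have y: "y \<in> Zk k"
    using M_pow_Zk[OF q] by (auto simp: Zk_def y_def sum_fun_apply)
  have My: "M y = (\<Sum>j<m. (\<lambda>i. int (Suc j) * (M ^^ Suc j) q i))"
    by (simp add: y_def additive.sum[OF additive_M] additive_int_mult[OF additive_M])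
  have "(y + x - M y) i = x i mod int m" for i
  proof -
    have "y i - M y i = (\<Sum>j<m. (M ^^ j) q i) - int m * (M ^^ m) q i"
      using weighted_sum_telescope[of "\<lambda>j. (M ^^ j) q i" m]
      by (simp only: My) (simp add: y_def sum_fun_apply)
    also have "\<dots> = - (int m * q i)"
      using fun_cong[OF M_norm[OF q], of i] M_pow_m[OF q] by (simp add: sum_fun_apply)
    finally have "y i - M y i = - (int m * q i)" .
    then show ?thesis
      using mult_div_mod_eq[of "int m" "x i"] unfolding q_def plus_fun_apply minus_apply by linarith
  qed
  then have "y + x - M y \<in> {v \<in> Zk k. \<forall>i. 0 \<le> v i \<and> v i < int m}"
    using x y m_pos by (simp add: Zk_add Zk_diff)
  then show ?thesis using y by blast
qed

theorem finite_reidemeister_twist: "finite_reidemeister W twist"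
proof (rule finite_reidemeisterI[OF group_wreath_Zk twist_hom])
  let ?X = "{v \<in> Zk k. \<forall>i. 0 \<le> v i \<and> v i < int m}"
  show "finite ((\<lambda>v. (\<lambda>z. \<one>, v)) ` ?X)"
    by (simp add: finite_Zk_box)
  fix a assume a: "a \<in> carrier W"
  obtain f x where ax: "a = (f, x)" by fastforce
  then have x: "x \<in> Zk k" using a by (simp add: carrier_wreath_Zk)
  obtain y where y: "y \<in> Zk k" "y + x - M y \<in> ?X"
    using exists_reduced_translation[OF x] by blast
  have "(a, (\<lambda>z. \<one>, y + x - M y)) \<in> reid_rel W twist"
    using reid_rel_base_to_one[OF a[unfolded ax]] reid_rel_translation[OF x y(1)]
      equiv_reid_rel[OF group_wreath_Zk twist_hom]
    by (auto simp: ax elim: equivE transE)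
  then show "\<exists>s\<in>(\<lambda>v. (\<lambda>z. \<one>, v)) ` ?X. (a, s) \<in> reid_rel W twist"
    using y(2) by blast
qed

end

theorem wreath_Zk_finite_reidemeister:
  assumes "comm_group G" "finite (carrier G)" "0 < m" "fpf_power_aut G m \<psi>" "vanishing_norm k m M"
  shows "\<exists>\<phi>. \<phi> \<in> iso (wreath_Zk G k) (wreath_Zk G k) \<and> finite_reidemeister (wreath_Zk G k) \<phi>"
proof -
  interpret wreath_twist G k m \<psi> M
    using assms by (simp add: wreath_twist_def wreath_twist_axioms_def)
  show ?thesis using twist_iso finite_reidemeister_twist by blast
qed

section \<open>Block-diagonal operators\<close>

definition vec_take :: "nat \<Rightarrow> (nat \<Rightarrow> int) \<Rightarrow> nat \<Rightarrow> int" where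
  "vec_take n u = (\<lambda>i. if i < n then u i else 0)"

definition vec_drop :: "nat \<Rightarrow> (nat \<Rightarrow> int) \<Rightarrow> nat \<Rightarrow> int" where
  "vec_drop n u = (\<lambda>i. u (i + n))"

definition vec_append :: "nat \<Rightarrow> (nat \<Rightarrow> int) \<Rightarrow> (nat \<Rightarrow> int) \<Rightarrow> nat \<Rightarrow> int" where
  "vec_append n a b = (\<lambda>i. if i < n then a i else b (i - n))"

definition direct_sum ::
    "nat \<Rightarrow> ((nat \<Rightarrow> int) \<Rightarrow> nat \<Rightarrow> int) \<Rightarrow> ((nat \<Rightarrow> int) \<Rightarrow> nat \<Rightarrow> int) \<Rightarrow> (nat \<Rightarrow> int) \<Rightarrow> nat \<Rightarrow> int"
  where "direct_sum n L L' u = vec_append n (L (vec_take n u)) (L' (vec_drop n u))"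

lemma vec_take_Zk: "vec_take n u \<in> Zk n"
  by (simp add: vec_take_def Zk_def)

lemma vec_drop_Zk: "u \<in> Zk (n + n') \<Longrightarrow> vec_drop n u \<in> Zk n'"
  by (simp add: vec_drop_def Zk_def)

lemma vec_append_Zk: "b \<in> Zk n' \<Longrightarrow> vec_append n a b \<in> Zk (n + n')"
  by (simp add: vec_append_def Zk_def)

lemma vec_take_append: "a \<in> Zk n \<Longrightarrow> vec_take n (vec_append n a b) = a"
  by (auto simp: vec_take_def vec_append_def Zk_def)

lemma vec_drop_append [simp]: "vec_drop n (vec_append n a b) = b"
  by (simp add: vec_drop_def vec_append_def)

lemma vec_append_take_drop [simp]: "vec_append n (vec_take n u) (vec_drop n u) = u"
  by (simp add: vec_append_def vec_take_def vec_drop_def fun_eq_iff)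

lemma vec_take_add: "vec_take n (u + v) = vec_take n u + vec_take n v"
  by (simp add: vec_take_def fun_eq_iff)

lemma vec_drop_add: "vec_drop n (u + v) = vec_drop n u + vec_drop n v"
  by (simp add: vec_drop_def fun_eq_iff)

lemma vec_append_zero [simp]: "vec_append n 0 0 = 0"
  by (simp add: vec_append_def fun_eq_iff)

lemma vec_append_add: "vec_append n (a + a') (b + b') = vec_append n a b + vec_append n a' b'"
  by (simp add: vec_append_def fun_eq_iff)

lemma vec_append_diff: "vec_append n (a - a') (b - b') = vec_append n a b - vec_append n a' b'"
  by (simp add: vec_append_def fun_eq_iff)

lemma vec_append_sum:
  "vec_append n (\<Sum>j\<in>A. a j) (\<Sum>j\<in>A. b j) = (\<Sum>j\<in>A. vec_append n (a j) (b j))"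
  by (auto simp: vec_append_def fun_eq_iff sum_fun_apply)

lemma Zk_linear_direct_sum:
  assumes "Zk_linear n L" "Zk_linear n' L'"
  shows "Zk_linear (n + n') (direct_sum n L L')"
proof -
  have "additive (direct_sum n L L')"
    using assms by (simp add: additive_def Zk_linear_def direct_sum_def vec_append_add
        vec_take_add vec_drop_add)
  then show ?thesis
    using assms by (simp add: Zk_linear_def direct_sum_def vec_append_Zk)
qed

lemma direct_sum_funpow:
  assumes "Zk_linear n L" "Zk_linear n' L'" "u \<in> Zk (n + n')"
  shows "(direct_sum n L L' ^^ j) u
           = vec_append n ((L ^^ j) (vec_take n u)) ((L' ^^ j) (vec_drop n u))"
proof (induction j)
  case (Suc j)
  have "(L ^^ j) (vec_take n u) \<in> Zk n"
    using Zk_linear_funpow_Zk[OF assms(1) vec_take_Zk] .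
  then show ?case
    using Suc by (simp add: direct_sum_def vec_take_append)
qed simp

lemma vanishing_norm_direct_sum:
  assumes L: "vanishing_norm n m L" and L': "vanishing_norm n' m L'"
  shows "vanishing_norm (n + n') m (direct_sum n L L')"
proof -
  have lin: "Zk_linear n L" "Zk_linear n' L'"
    using assms by (simp_all add: vanishing_norm_def)
  have "(\<Sum>j<m. (direct_sum n L L' ^^ j) v) = 0" if v: "v \<in> Zk (n + n')" for v
  proof -
    have "(\<Sum>j<m. (direct_sum n L L' ^^ j) v)
        = vec_append n (\<Sum>j<m. (L ^^ j) (vec_take n v)) (\<Sum>j<m. (L' ^^ j) (vec_drop n v))"
      by (simp add: direct_sum_funpow[OF lin v] vec_append_sum)
    also have "\<dots> = 0"
      using L L' vec_take_Zk vec_drop_Zk[OF v] by (simp add: vanishing_norm_def)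
    finally show ?thesis .
  qed
  then show ?thesis
    using Zk_linear_direct_sum[OF lin] by (simp add: vanishing_norm_def)
qed

text \<open>For additive \<open>F\<close>, \<open>injective_mod q d F\<close> says that \<open>F\<close> is injective on
  \<open>(\<int>/q)^d\<close>.  Hence \<open>fpf_power_mod q d m L\<close> says that \<open>L\<close> induces an automorphism of
  \<open>(\<int>/q)^d\<close> whose \<open>m\<close>-th power fixes only \<open>0\<close>.\<close>

definition injective_mod :: "int \<Rightarrow> nat \<Rightarrow> ((nat \<Rightarrow> int) \<Rightarrow> nat \<Rightarrow> int) \<Rightarrow> bool" where
  "injective_mod q d F \<longleftrightarrow> (\<forall>u\<in>Zk d. (\<forall>i. q dvd F u i) \<longrightarrow> (\<forall>i. q dvd u i))"

definition fpf_power_mod :: "int \<Rightarrow> nat \<Rightarrow> nat \<Rightarrow> ((nat \<Rightarrow> int) \<Rightarrow> nat \<Rightarrow> int) \<Rightarrow> bool" where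
  "fpf_power_mod q d m L \<longleftrightarrow>
     Zk_linear d L \<and> injective_mod q d L \<and> injective_mod q d (\<lambda>u. (L ^^ m) u - u)"

lemma injective_mod_cong:
  "(\<And>u. u \<in> Zk d \<Longrightarrow> F u = F' u) \<Longrightarrow> injective_mod q d F \<longleftrightarrow> injective_mod q d F'"
  by (simp add: injective_mod_def)

lemma injective_mod_append:
  assumes F: "injective_mod q n F" and F': "injective_mod q n' F'"
    and F_Zk: "\<And>u. u \<in> Zk n \<Longrightarrow> F u \<in> Zk n"
  shows "injective_mod q (n + n') (\<lambda>u. vec_append n (F (vec_take n u)) (F' (vec_drop n u)))"
  unfolding injective_mod_def
proof (intro ballI impI allI)
  fix u i assume u: "u \<in> Zk (n + n')"
    and dvd: "\<forall>i. q dvd vec_append n (F (vec_take n u)) (F' (vec_drop n u)) i"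
  have "q dvd F (vec_take n u) j" for j
    using dvd[rule_format, of j] F_Zk[OF vec_take_Zk, of u]
    by (cases "j < n") (simp_all add: vec_append_def Zk_def)
  then have take: "q dvd vec_take n u j" for j
    using F vec_take_Zk by (simp add: injective_mod_def)
  have "q dvd F' (vec_drop n u) j" for j
    using dvd[rule_format, of "j + n"] by (simp add: vec_append_def)
  then have drop: "q dvd vec_drop n u j" for j
    using F' vec_drop_Zk[OF u] by (simp add: injective_mod_def)
  show "q dvd u i"
    using take[of i] drop[of "i - n"] by (cases "i < n") (simp_all add: vec_take_def vec_drop_def)
qed

lemma fpf_power_mod_direct_sum:
  assumes L: "fpf_power_mod q n m L" and L': "fpf_power_mod q n' m L'"
  shows "fpf_power_mod q (n + n') m (direct_sum n L L')"
proof -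
  have lin: "Zk_linear n L" "Zk_linear n' L'"
    using assms by (simp_all add: fpf_power_mod_def)
  have "injective_mod q (n + n') (direct_sum n L L')"
    using injective_mod_append[of q n L n' L'] L L' lin(1)
    by (simp add: fpf_power_mod_def Zk_linear_def direct_sum_def[abs_def])
  moreover have "injective_mod q (n + n') (\<lambda>u. (direct_sum n L L' ^^ m) u - u)"
  proof -
    have "injective_mod q (n + n')
        (\<lambda>u. vec_append n ((L ^^ m) (vec_take n u) - vec_take n u)
                         ((L' ^^ m) (vec_drop n u) - vec_drop n u))"
      using injective_mod_append[of q n "\<lambda>u. (L ^^ m) u - u" n' "\<lambda>u. (L' ^^ m) u - u"] L L'
      by (simp add: fpf_power_mod_def Zk_diff Zk_linear_funpow_Zk[OF lin(1)])
    then show ?thesis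
      by (rule iffD1[OF injective_mod_cong, rotated])
        (simp add: direct_sum_funpow[OF lin] vec_append_diff)
  qed
  ultimately show ?thesis
    using Zk_linear_direct_sum[OF lin] by (simp add: fpf_power_mod_def)
qed

lemma Zk_0: "Zk 0 = {0}"
  by (auto simp: Zk_def fun_eq_iff)

lemma Zk_linear_0: "Zk_linear 0 (\<lambda>u. 0)"
  by (simp add: Zk_linear_def additive_def)

definition fpf_dims :: "int \<Rightarrow> nat \<Rightarrow> nat set" where
  "fpf_dims q m = {d. \<exists>L. fpf_power_mod q d m L}"

definition norm_dims :: "nat \<Rightarrow> nat set" where
  "norm_dims m = {k. \<exists>M. vanishing_norm k m M}"

lemma zero_in_fpf_dims: "0 \<in> fpf_dims q m"
  unfolding fpf_dims_def fpf_power_mod_def injective_mod_def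
  using Zk_linear_0 by (auto simp: Zk_0)

lemma add_in_fpf_dims: "d \<in> fpf_dims q m \<Longrightarrow> d' \<in> fpf_dims q m \<Longrightarrow> d + d' \<in> fpf_dims q m"
  unfolding fpf_dims_def using fpf_power_mod_direct_sum by blast

lemma zero_in_norm_dims: "0 \<in> norm_dims m"
proof -
  have "((\<lambda>u :: nat \<Rightarrow> int. 0 :: nat \<Rightarrow> int) ^^ j) 0 = 0" for j
    by (cases j) simp_all
  then show ?thesis
    unfolding norm_dims_def vanishing_norm_def using Zk_linear_0 by (auto simp: Zk_0)
qed

lemma add_in_norm_dims: "k \<in> norm_dims m \<Longrightarrow> k' \<in> norm_dims m \<Longrightarrow> k + k' \<in> norm_dims m"
  unfolding norm_dims_def using vanishing_norm_direct_sum by blast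

section \<open>Integer matrices and certificates\<close>

definition mat_apply :: "int list list \<Rightarrow> (nat \<Rightarrow> int) \<Rightarrow> nat \<Rightarrow> int" where
  "mat_apply A u = (\<lambda>i. if i < length A then \<Sum>s<length A. A ! i ! s * u s else 0)"

definition mat_mult :: "int list list \<Rightarrow> int list list \<Rightarrow> int list list" where
  "mat_mult A B =
     map (\<lambda>i. map (\<lambda>t. \<Sum>s<length A. A ! i ! s * B ! s ! t) [0..<length A]) [0..<length A]"

definition mat_add :: "int list list \<Rightarrow> int list list \<Rightarrow> int list list" where
  "mat_add A B = map (\<lambda>i. map (\<lambda>t. A ! i ! t + B ! i ! t) [0..<length A]) [0..<length A]"

definition mat_scalar :: "nat \<Rightarrow> int \<Rightarrow> int list list" where
  "mat_scalar n c = map (\<lambda>i. map (\<lambda>t. if i = t then c else 0) [0..<n]) [0..<n]"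

primrec mat_pow :: "int list list \<Rightarrow> nat \<Rightarrow> int list list" where
  "mat_pow A 0 = mat_scalar (length A) 1"
| "mat_pow A (Suc j) = mat_mult A (mat_pow A j)"

text \<open>\<open>mat_norm A m\<close> is \<open>1 + A + \<dots> + A^(m-1)\<close>, evaluated by Horner's rule.\<close>

primrec mat_norm :: "int list list \<Rightarrow> nat \<Rightarrow> int list list" where
  "mat_norm A 0 = mat_scalar (length A) 0"
| "mat_norm A (Suc j) = mat_add (mat_scalar (length A) 1) (mat_mult A (mat_norm A j))"

text \<open>\<open>companion [a\<^sub>0, \<dots>, a\<^sub>n\<^sub>-\<^sub>1]\<close> is the companion matrix of
  \<open>x^n + a\<^sub>n\<^sub>-\<^sub>1 x^(n-1) + \<dots> + a\<^sub>0\<close>: ones below the diagonal and last column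
  \<open>-a\<^sub>0, \<dots>, -a\<^sub>n\<^sub>-\<^sub>1\<close>.\<close>

definition companion :: "int list \<Rightarrow> int list list" where
  "companion cs =
     map (\<lambda>i. map (\<lambda>t. if Suc t = length cs then - cs ! i else if i = Suc t then 1 else 0)
       [0..<length cs]) [0..<length cs]"

lemma length_mat_mult [simp]: "length (mat_mult A B) = length A"
  by (simp add: mat_mult_def)

lemma length_mat_add [simp]: "length (mat_add A B) = length A"
  by (simp add: mat_add_def)

lemma length_mat_scalar [simp]: "length (mat_scalar n c) = n"
  by (simp add: mat_scalar_def)

lemma length_mat_pow [simp]: "length (mat_pow A j) = length A"
  by (cases j) simp_all

lemma length_mat_norm [simp]: "length (mat_norm A j) = length A"
  by (cases j) simp_all

lemma Zk_linear_mat_apply: "Zk_linear (length A) (mat_apply A)"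
  by (simp add: Zk_linear_def additive_def mat_apply_def Zk_def fun_eq_iff distrib_left sum.distrib)

lemma mat_apply_mult:
  assumes "length B = length A"
  shows "mat_apply A (mat_apply B u) = mat_apply (mat_mult A B) u"
proof (rule ext)
  fix i
  show "mat_apply A (mat_apply B u) i = mat_apply (mat_mult A B) u i"
  proof (cases "i < length A")
    case True
    have "mat_apply A (mat_apply B u) i = (\<Sum>s<length A. \<Sum>t<length A. A ! i ! s * (B ! s ! t * u t))"
      using True assms by (simp add: mat_apply_def sum_distrib_left)
    also have "\<dots> = (\<Sum>t<length A. (\<Sum>s<length A. A ! i ! s * B ! s ! t) * u t)"
      by (subst sum.swap) (simp add: sum_distrib_right mult.assoc)
    also have "\<dots> = mat_apply (mat_mult A B) u i"
      using True by (simp add: mat_apply_def mat_mult_def)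
    finally show ?thesis .
  qed (simp add: mat_apply_def)
qed

lemma mat_apply_add:
  assumes "length B = length A"
  shows "mat_apply (mat_add A B) u = mat_apply A u + mat_apply B u"
  using assms by (simp add: mat_apply_def mat_add_def fun_eq_iff distrib_right sum.distrib)

lemma mat_apply_scalar: "u \<in> Zk n \<Longrightarrow> mat_apply (mat_scalar n c) u = (\<lambda>i. c * u i)"
  by (auto simp: mat_apply_def mat_scalar_def Zk_def fun_eq_iff if_distrib[of "\<lambda>x. x * _"]
      cong: if_cong)

lemma mat_apply_pow: "u \<in> Zk (length A) \<Longrightarrow> mat_apply (mat_pow A j) u = (mat_apply A ^^ j) u"
  by (induction j) (simp_all add: mat_apply_scalar flip: mat_apply_mult)

lemma mat_apply_norm:
  assumes u: "u \<in> Zk (length A)"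
  shows "mat_apply (mat_norm A m) u = (\<Sum>j<m. (mat_apply A ^^ j) u)"
proof (induction m)
  case 0
  then show ?case using u by (simp add: mat_apply_scalar zero_fun_def)
next
  case (Suc m)
  have "mat_apply (mat_norm A (Suc m)) u = u + mat_apply A (\<Sum>j<m. (mat_apply A ^^ j) u)"
    using u Suc by (simp add: mat_apply_add mat_apply_scalar flip: mat_apply_mult)
  also have "\<dots> = (\<Sum>j<Suc m. (mat_apply A ^^ j) u)"
    using additive.sum[of "mat_apply A"] Zk_linear_mat_apply[of A]
    by (simp add: Zk_linear_def sum.lessThan_Suc_shift del: sum.lessThan_Suc)
  finally show ?case .
qed

text \<open>A certificate consists of matrices with \<open>C A = c\<close> and \<open>C' (A^m - 1) = c'\<close>; when
  \<open>c\<close> and \<open>c'\<close> are prime to \<open>p\<close>, both \<open>A\<close> and \<open>A^m - 1\<close> are invertible modulo \<open>p^r\<close>.\<close>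

definition fpf_certificate ::
    "nat \<Rightarrow> int list list \<Rightarrow> int list list \<Rightarrow> int \<Rightarrow> int list list \<Rightarrow> int \<Rightarrow> bool" where
  "fpf_certificate m A C c C' c' \<longleftrightarrow> length C = length A \<and> length C' = length A
     \<and> mat_mult C A = mat_scalar (length A) c
     \<and> mat_mult C' (mat_pow A m) = mat_add C' (mat_scalar (length A) c')"

lemma norm_dims_mat:
  assumes "length A = k" and "mat_norm A m = mat_scalar k 0"
  shows "k \<in> norm_dims m"
proof -
  have "(\<Sum>j<m. (mat_apply A ^^ j) v) = 0" if "v \<in> Zk (length A)" for v
    using mat_apply_norm[OF that, of m] mat_apply_scalar[OF that, of 0] assms
    by (simp add: zero_fun_def)
  then show ?thesis
    using Zk_linear_mat_apply assms(1) unfolding norm_dims_def vanishing_norm_def by blast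
qed

lemma injective_mod_mat_apply:
  assumes "mat_mult C A = mat_scalar (length A) c" "length C = length A" "coprime c q"
  shows "injective_mod q (length A) (mat_apply A)"
  unfolding injective_mod_def
proof (intro ballI impI allI)
  fix u i assume u: "u \<in> Zk (length A)" and dvd: "\<forall>i. q dvd mat_apply A u i"
  have "q dvd mat_apply C (mat_apply A u) i"
    using dvd by (simp add: mat_apply_def dvd_sum)
  then have "q dvd c * u i"
    using assms(1,2) u by (simp add: mat_apply_mult mat_apply_scalar)
  then show "q dvd u i"
    using assms(3) by (simp add: coprime_commute coprime_dvd_mult_right_iff)
qed

lemma fpf_dims_certificate:
  assumes "length A = d" and "fpf_certificate m A C c C' c'"
    and coprime: "coprime c (int p)" "coprime c' (int p)"
  shows "d \<in> fpf_dims (int (p ^ r)) m"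
proof -
  have C: "mat_mult C A = mat_scalar (length A) c" "length C = length A"
    and C': "mat_mult C' (mat_pow A m) = mat_add C' (mat_scalar (length A) c')"
      "length C' = length A"
    using assms(2) by (simp_all add: fpf_certificate_def)
  have coprime_pow: "coprime c (int (p ^ r))" "coprime c' (int (p ^ r))"
    using coprime by simp_all
  have "injective_mod (int (p ^ r)) (length A) (\<lambda>u. (mat_apply A ^^ m) u - u)"
    unfolding injective_mod_def
  proof (intro ballI impI allI)
    fix u i assume u: "u \<in> Zk (length A)"
      and dvd: "\<forall>i. int (p ^ r) dvd ((mat_apply A ^^ m) u - u) i"
    have "int (p ^ r) dvd mat_apply C' ((mat_apply A ^^ m) u - u) i"
      using dvd by (simp add: mat_apply_def dvd_sum)
    also have "mat_apply C' ((mat_apply A ^^ m) u - u) = (\<lambda>i. c' * u i)"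
      using C' u additive.diff[of "mat_apply C'"] Zk_linear_mat_apply[of C']
      by (simp add: Zk_linear_def mat_apply_mult mat_apply_add mat_apply_scalar
          flip: mat_apply_pow[OF u])
    finally show "int (p ^ r) dvd u i"
      using coprime_pow(2) by (simp add: coprime_commute coprime_dvd_mult_right_iff)
  qed
  then show ?thesis
    using injective_mod_mat_apply[OF C coprime_pow(1)] Zk_linear_mat_apply[of A] assms(1)
    unfolding fpf_dims_def fpf_power_mod_def by blast
qed

lemma mat_pow_1x1: "mat_pow [[c]] j = [[c ^ j]]"
  by (induction j) (simp_all add: mat_mult_def mat_scalar_def)

lemma fpf_dims_scalar:
  assumes "coprime c (int p)" "coprime (c ^ m - 1) (int p)"
  shows "1 \<in> fpf_dims (int (p ^ r)) m"
  using assms by (intro fpf_dims_certificate[of "[[c]]" 1 m "[[1]]" c "[[1]]" "c ^ m - 1"])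
    (simp_all add: fpf_certificate_def mat_pow_1x1 mat_mult_def mat_add_def mat_scalar_def)

locale nat_add_submonoid =
  fixes S :: "nat set"
  assumes zero_mem: "0 \<in> S" and add_mem: "a \<in> S \<Longrightarrow> b \<in> S \<Longrightarrow> a + b \<in> S"
begin

lemma mult_mem: "a \<in> S \<Longrightarrow> c * a \<in> S"
  by (induction c) (simp_all add: zero_mem add_mem)

lemma mem_of_1: "1 \<in> S \<Longrightarrow> d \<in> S"
  using mult_mem[of 1 d] by simp

lemma mem_of_2: "2 \<in> S \<Longrightarrow> even d \<Longrightarrow> d \<in> S"
  using mult_mem[of 2 "d div 2"] by simp

lemma mem_of_4: "4 \<in> S \<Longrightarrow> 4 dvd d \<Longrightarrow> d \<in> S"
  using mult_mem[of 4 "d div 4"] by simp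

lemma mem_of_2_3: "2 \<in> S \<Longrightarrow> 3 \<in> S \<Longrightarrow> 2 \<le> d \<Longrightarrow> d \<in> S"
proof -
  assume S: "2 \<in> S" "3 \<in> S" and d: "2 \<le> d"
  show "d \<in> S"
  proof (cases "even d")
    case False
    then have "d = 3 + (d - 3) div 2 * 2" using d by presburger
    then show ?thesis using add_mem[OF S(2) mult_mem[OF S(1)]] by metis
  qed (use mem_of_2 S in blast)
qed

lemma mem_of_2_5: "2 \<in> S \<Longrightarrow> 5 \<in> S \<Longrightarrow> 2 \<le> d \<Longrightarrow> d \<noteq> 3 \<Longrightarrow> d \<in> S"
proof -
  assume S: "2 \<in> S" "5 \<in> S" and d: "2 \<le> d" "d \<noteq> 3"
  show "d \<in> S"
  proof (cases "even d")
    case False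
    then have "d = 5 + (d - 5) div 2 * 2" using d by presburger
    then show ?thesis using add_mem[OF S(2) mult_mem[OF S(1)]] by metis
  qed (use mem_of_2 S in blast)
qed

lemma mem_of_3_4_5: "3 \<in> S \<Longrightarrow> 4 \<in> S \<Longrightarrow> 5 \<in> S \<Longrightarrow> 3 \<le> d \<Longrightarrow> d \<in> S"
proof -
  assume S: "3 \<in> S" "4 \<in> S" "5 \<in> S" and d: "3 \<le> d"
  have "\<exists>c. d = c * 3 \<or> d = 4 + c * 3 \<or> d = 5 + c * 3"
    using d by presburger
  then obtain c where "d = c * 3 \<or> d = 4 + c * 3 \<or> d = 5 + c * 3" ..
  then show "d \<in> S"
    using mult_mem[OF S(1), of c] add_mem[OF S(2)] add_mem[OF S(3)] by auto
qed

lemma mem_of_4_6: "4 \<in> S \<Longrightarrow> 6 \<in> S \<Longrightarrow> even d \<Longrightarrow> 4 \<le> d \<Longrightarrow> d \<in> S"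
proof -
  assume S: "4 \<in> S" "6 \<in> S" and d: "even d" "4 \<le> d"
  show "d \<in> S"
  proof (cases "4 dvd d")
    case False
    then have "d = 6 + (d - 6) div 4 * 4" using d by presburger
    then show ?thesis using add_mem[OF S(2) mult_mem[OF S(1)]] by metis
  qed (use mem_of_4 S in blast)
qed

end

interpretation fpf_dims: nat_add_submonoid "fpf_dims q m"
  by unfold_locales (simp_all add: zero_in_fpf_dims add_in_fpf_dims)

interpretation norm_dims: nat_add_submonoid "norm_dims m"
  by unfold_locales (simp_all add: zero_in_norm_dims add_in_norm_dims)

lemma coprime_prime_small:
  assumes "Factorial_Ring.prime p" "0 < \<bar>c\<bar>" "\<bar>c\<bar> < int p"
  shows "coprime c (int p)"
proof -
  have "\<not> int p dvd c"
    using assms(2,3) by (auto dest: dvd_imp_le_int)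
  then show ?thesis
    using prime_imp_coprime[of "int p" c] assms(1) by (simp add: coprime_commute)
qed

lemma fpf_dims_odd_exponent:
  assumes "Factorial_Ring.prime p" "p \<noteq> 2" "odd m"
  shows "d \<in> fpf_dims (int (p ^ r)) m"
proof -
  have "2 < p" using assms prime_ge_2_nat[of p] by linarith
  then have "coprime (- 2) (int p)"
    using coprime_prime_small[OF assms(1), of "- 2"] by simp
  then have "1 \<in> fpf_dims (int (p ^ r)) m"
    using assms(3) by (intro fpf_dims_scalar[of "- 1"]) simp_all
  then show ?thesis by (rule fpf_dims.mem_of_1)
qed

text \<open>Over \<open>\<bbbF>\<^sub>2\<close> the companion matrices of \<open>x^2+x+1\<close>, \<open>x^3+x+1\<close>, \<open>x^4+x^3+x^2+x+1\<close>
  and \<open>x^5+x^2+1\<close> have eigenvalues of multiplicative order 3, 7, 5 and 31; over \<open>\<bbbF>\<^sub>3\<close>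
  those of \<open>x^2+1\<close> and \<open>x^3-x+1\<close> have order 4 and 26.  When this order does not divide
  \<open>m\<close>, \<open>A^m - 1\<close> is invertible modulo \<open>p\<close>.\<close>

lemma fpf_dims_exponent_2:
  assumes "Factorial_Ring.prime p" and "p = 2 \<or> p = 3 \<Longrightarrow> 2 \<le> d"
  shows "d \<in> fpf_dims (int (p ^ r)) 2"
proof -
  consider "p = 2" | "p = 3" | "p \<noteq> 2" "p \<noteq> 3" by blast
  then show ?thesis
  proof cases
    case 1
    have "2 \<in> fpf_dims (int (2 ^ r)) 2"
      by (rule fpf_dims_certificate[of "companion [1, 1]" _ _ "[[-1, 1], [-1, 0]]" 1
            "[[-1, -1], [1, -2]]" 3]) code_simp+
    moreover have "3 \<in> fpf_dims (int (2 ^ r)) 2"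
      by (rule fpf_dims_certificate[of "companion [1, 1, 0]" _ _
            "[[1, -1, 0], [0, 0, -1], [1, 0, 0]]" "- 1"
            "[[4, -2, 1], [-1, 2, -1], [2, -1, 2]]" "- 3"]) code_simp+
    ultimately show ?thesis
      using 1 assms(2) by (simp add: fpf_dims.mem_of_2_3)
  next
    case 2
    have "2 \<in> fpf_dims (int (3 ^ r)) 2"
      by (rule fpf_dims_certificate[of "companion [1, 0]" _ _ "[[0, 1], [-1, 0]]" 1
            "[[-2, 0], [0, -2]]" 4]) code_simp+
    moreover have "3 \<in> fpf_dims (int (3 ^ r)) 2"
      by (rule fpf_dims_certificate[of "companion [1, -1, 0]" _ _
            "[[-1, -1, 0], [0, 0, -1], [1, 0, 0]]" "- 1"
            "[[0, 0, 1], [-1, 0, -1], [0, -1, 0]]" 1]) code_simp+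
    ultimately show ?thesis
      using 2 assms(2) by (simp add: fpf_dims.mem_of_2_3)
  next
    case 3
    then have "3 < p"
      using prime_ge_2_nat[OF assms(1)] by linarith
    then have "1 \<in> fpf_dims (int (p ^ r)) 2"
      using coprime_prime_small[OF assms(1), of 2] coprime_prime_small[OF assms(1), of 3]
      by (intro fpf_dims_scalar[of 2]) simp_all
    then show ?thesis by (rule fpf_dims.mem_of_1)
  qed
qed

lemma fpf_dims_exponent_3:
  assumes "Factorial_Ring.prime p" and "p = 2 \<Longrightarrow> 3 \<le> d"
  shows "d \<in> fpf_dims (int (p ^ r)) 3"
proof (cases "p = 2")
  case True
  have "3 \<in> fpf_dims (int (2 ^ r)) 3"
    by (rule fpf_dims_certificate[of "companion [1, 1, 0]" _ _
          "[[1, -1, 0], [0, 0, -1], [1, 0, 0]]" "- 1"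
          "[[5, -1, 2], [-2, 4, 1], [1, -2, 4]]" "- 9"]) code_simp+
  moreover have "4 \<in> fpf_dims (int (2 ^ r)) 3"
    by (rule fpf_dims_certificate[of "companion [1, 1, 1, 1]" _ _
          "[[-1, 1, 0, 0], [-1, 0, 1, 0], [-1, 0, 0, 1], [-1, 0, 0, 0]]" 1
          "[[-3, 2, -3, 2], [-1, -1, -1, -1], [1, 1, -4, 1], [-2, 3, -2, -2]]" 5]) code_simp+
  moreover have "5 \<in> fpf_dims (int (2 ^ r)) 3"
    by (rule fpf_dims_certificate[of "companion [1, 0, 1, 0, 0]" _ _
          "[[0, -1, 0, 0, 0], [1, 0, -1, 0, 0], [0, 0, 0, -1, 0], [0, 0, 0, 0, -1],
            [1, 0, 0, 0, 0]]" "- 1"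
          "[[8, 2, -4, -1, 2], [-4, 8, 2, -4, -1], [1, -2, 4, 1, -2], [4, 1, -2, 4, 1],
            [-2, 4, 1, -2, 4]]" "- 9"]) code_simp+
  ultimately show ?thesis
    using True assms(2) by (simp add: fpf_dims.mem_of_3_4_5)
qed (intro fpf_dims_odd_exponent[OF assms(1)]; simp)

lemma fpf_dims_exponent_5:
  assumes "Factorial_Ring.prime p" and "p = 2 \<Longrightarrow> 2 \<le> d"
  shows "d \<in> fpf_dims (int (p ^ r)) 5"
proof (cases "p = 2")
  case True
  have "2 \<in> fpf_dims (int (2 ^ r)) 5"
    by (rule fpf_dims_certificate[of "companion [1, 1]" _ _ "[[-1, 1], [-1, 0]]" 1
          "[[-1, -1], [1, -2]]" 3]) code_simp+
  moreover have "3 \<in> fpf_dims (int (2 ^ r)) 5"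
    by (rule fpf_dims_certificate[of "companion [1, 1, 0]" _ _
          "[[1, -1, 0], [0, 0, -1], [1, 0, 0]]" "- 1"
          "[[1, -2, 1], [-1, -1, -1], [2, -1, -1]]" "- 3"]) code_simp+
  ultimately show ?thesis
    using True assms(2) by (simp add: fpf_dims.mem_of_2_3)
qed (intro fpf_dims_odd_exponent[OF assms(1)]; simp)

lemma fpf_dims_exponent_35:
  assumes "Factorial_Ring.prime p" and "p = 2 \<Longrightarrow> 2 \<le> d \<and> d \<noteq> 3"
  shows "d \<in> fpf_dims (int (p ^ r)) 35"
proof (cases "p = 2")
  case True
  have "2 \<in> fpf_dims (int (2 ^ r)) 35"
    by (rule fpf_dims_certificate[of "companion [1, 1]" _ _ "[[-1, 1], [-1, 0]]" 1
          "[[-1, -1], [1, -2]]" 3]) code_simp+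
  moreover have "5 \<in> fpf_dims (int (2 ^ r)) 35"
    by (rule fpf_dims_certificate[of "companion [1, 0, 1, 0, 0]" _ _
          "[[0, -1, 0, 0, 0], [1, 0, -1, 0, 0], [0, 0, 0, -1, 0], [0, 0, 0, 0, -1],
            [1, 0, 0, 0, 0]]" "- 1"
          "[[116482, -38051, -65951, 49306, 28909], [9142, 116482, -38051, -65951, 49306],
            [-49306, -28909, 50531, 11255, -37042], [65951, -49306, -28909, 50531, 11255],
            [38051, 65951, -49306, -28909, 50531]]"
          "- 182523"]) code_simp+
  ultimately show ?thesis
    using True assms(2) by (simp add: fpf_dims.mem_of_2_5)
qed (intro fpf_dims_odd_exponent[OF assms(1)]; simp)

lemma norm_dims_2: "k \<in> norm_dims 2"
proof -
  have "1 \<in> norm_dims 2"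
    by (rule norm_dims_mat[of "companion [1]"]) code_simp+
  then show ?thesis by (rule norm_dims.mem_of_1)
qed

lemma norm_dims_3:
  assumes "even k" shows "k \<in> norm_dims 3"
proof -
  have "2 \<in> norm_dims 3"
    by (rule norm_dims_mat[of "companion [1, 1]"]) code_simp+
  then show ?thesis using assms by (rule norm_dims.mem_of_2)
qed

lemma norm_dims_5:
  assumes "4 dvd k" shows "k \<in> norm_dims 5"
proof -
  have "4 \<in> norm_dims 5"
    by (rule norm_dims_mat[of "companion [1, 1, 1, 1]"]) code_simp+
  then show ?thesis using assms by (rule norm_dims.mem_of_4)
qed

lemma norm_dims_35:
  assumes "even k" "4 \<le> k" shows "k \<in> norm_dims 35"
proof -
  have "4 \<in> norm_dims 35"
    by (rule norm_dims_mat[of "companion [1, 1, 1, 1]"]) code_simp+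
  moreover have "6 \<in> norm_dims 35"
    by (rule norm_dims_mat[of "companion [1, 1, 1, 1, 1, 1]"]) code_simp+
  ultimately show ?thesis using assms by (rule norm_dims.mem_of_4_6)
qed

section \<open>Automorphisms of products of cyclic groups\<close>

lemma additive_cong_mod:
  fixes L :: "('a \<Rightarrow> int) \<Rightarrow> 'b \<Rightarrow> int"
  assumes "additive L" and "\<And>t. u t mod q = v t mod q"
  shows "L u j mod q = L v j mod q"
proof -
  have "q dvd u t - v t" for t
    using assms(2) by (simp add: mod_eq_dvd_iff)
  then have "u - v = (\<lambda>t. q * ((u t - v t) div q))"
    by (simp add: fun_eq_iff)
  then have "L u - L v = (\<lambda>t. q * L (\<lambda>t. (u t - v t) div q) t)"
    using assms(1) additive_int_mult[of L q] by (simp flip: additive.diff)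
  then show ?thesis
    by (simp add: mod_eq_dvd_iff fun_eq_iff)
qed

locale mod_block_product =
  fixes n m :: nat and d q :: "nat \<Rightarrow> nat" and L :: "nat \<Rightarrow> (nat \<Rightarrow> int) \<Rightarrow> nat \<Rightarrow> int"
  assumes q_pos: "\<And>i. i < n \<Longrightarrow> 0 < q i"
    and fpf_L: "\<And>i. i < n \<Longrightarrow> fpf_power_mod (int (q i)) (d i) m (L i)"
begin

abbreviation I where "I \<equiv> {(i, j). i < n \<and> j < d i}"

abbreviation P where "P \<equiv> product_group I (\<lambda>(i, j). integer_mod_group (q i))"

definition row :: "(nat \<times> nat \<Rightarrow> int) \<Rightarrow> nat \<Rightarrow> nat \<Rightarrow> int" where
  "row x i = (\<lambda>t. if t < d i then x (i, t) else 0)"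

definition reduce :: "(nat \<times> nat \<Rightarrow> int) \<Rightarrow> nat \<times> nat \<Rightarrow> int" where
  "reduce x = (\<lambda>(i, j)\<in>I. L i (row x i) j mod int (q i))"

lemma carrier_P: "carrier P = (\<Pi>\<^sub>E a\<in>I. {0..<int (q (fst a))})"
  unfolding carrier_product_group
  by (rule PiE_cong) (auto simp: carrier_integer_mod_group dest: q_pos)

lemma mult_P: "x \<otimes>\<^bsub>P\<^esub> y = (\<lambda>(i, j)\<in>I. (x (i, j) + y (i, j)) mod int (q i))"
  by (auto simp: fun_eq_iff)

lemma one_P: "\<one>\<^bsub>P\<^esub> = (\<lambda>(i, j)\<in>I. 0)"
  by (auto simp: fun_eq_iff)

lemma row_Zk: "row x i \<in> Zk (d i)"
  by (simp add: row_def Zk_def)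

lemma linear_L: "i < n \<Longrightarrow> Zk_linear (d i) (L i)"
  using fpf_L by (simp add: fpf_power_mod_def)

lemma additive_L: "i < n \<Longrightarrow> additive (L i)"
  using linear_L by (simp add: Zk_linear_def)

lemma finite_carrier_P: "finite (carrier P)"
proof -
  have "finite I"
    by (rule finite_subset[of _ "SIGMA i:{..<n}. {..<d i}"]) auto
  then show ?thesis
    unfolding carrier_P by (rule finite_PiE) simp
qed

lemma reduce_closed: "reduce x \<in> carrier P"
  unfolding carrier_P using q_pos by (auto simp: reduce_def)

lemma reduce_hom: "reduce \<in> hom P P"
proof (rule homI)
  fix x y assume xy: "x \<in> carrier P" "y \<in> carrier P"
  have "L i (row (x \<otimes>\<^bsub>P\<^esub> y) i) j mod q i = (L i (row x i) j + L i (row y i) j) mod q i"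
    if "i < n" for i j
  proof -
    have "row (x \<otimes>\<^bsub>P\<^esub> y) i t mod q i = (row x i + row y i) t mod q i" for t
      using that by (simp add: row_def mult_P mod_simps)
    then have "L i (row (x \<otimes>\<^bsub>P\<^esub> y) i) j mod q i = L i (row x i + row y i) j mod q i"
      by (rule additive_cong_mod[OF additive_L[OF that]])
    then show ?thesis
      using additive_L[OF that] by (simp add: additive.add)
  qed
  then show "reduce (x \<otimes>\<^bsub>P\<^esub> y) = reduce x \<otimes>\<^bsub>P\<^esub> reduce y"
    by (auto simp: reduce_def mult_P fun_eq_iff mod_simps)
qed (rule reduce_closed)

lemma eq_one_if_rows_dvd:
  assumes x: "x \<in> carrier P" and dvd: "\<And>i j. i < n \<Longrightarrow> int (q i) dvd row x i j"
  shows "x = \<one>\<^bsub>P\<^esub>"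
proof (rule ext, clarify)
  fix i j
  show "x (i, j) = \<one>\<^bsub>P\<^esub> (i, j)"
  proof (cases "(i, j) \<in> I")
    case True
    have "0 \<le> x (i, j)" "x (i, j) < int (q i)"
      using True x unfolding carrier_P by (auto simp: PiE_iff)
    then show ?thesis
      using True dvd[of i j] by (simp add: row_def one_P dvd_eq_mod_eq_0)
  next
    case False
    then show ?thesis using x unfolding carrier_P by (auto simp: one_P PiE_iff extensional_def)
  qed
qed

lemma row_reduce_cong:
  assumes "i < n"
  shows "row (reduce x) i t mod q i = L i (row x i) t mod q i"
  using assms linear_L[OF assms] by (simp add: row_def reduce_def Zk_linear_def Zk_def)

lemma reduce_kernel:
  assumes x: "x \<in> carrier P" and red: "reduce x = \<one>\<^bsub>P\<^esub>"
  shows "x = \<one>\<^bsub>P\<^esub>"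
proof (rule eq_one_if_rows_dvd[OF x])
  fix i j assume i: "i < n"
  have "int (q i) dvd L i (row x i) t" for t
    using row_reduce_cong[OF i, of x t] i
    by (simp add: red row_def one_P dvd_eq_mod_eq_0 del: one_product_group)
  then show "int (q i) dvd row x i j"
    using fpf_L[OF i] row_Zk by (simp add: fpf_power_mod_def injective_mod_def)
qed

lemma row_reduce_pow_cong:
  assumes "i < n"
  shows "row ((reduce ^^ s) x) i t mod q i = (L i ^^ s) (row x i) t mod q i"
proof (induction s arbitrary: t)
  case (Suc s)
  have "row ((reduce ^^ Suc s) x) i t mod q i = L i (row ((reduce ^^ s) x) i) t mod q i"
    using row_reduce_cong[OF assms] by simp
  also have "\<dots> = L i ((L i ^^ s) (row x i)) t mod q i"
    by (rule additive_cong_mod[OF additive_L[OF assms] Suc.IH])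
  finally show ?case by simp
qed simp

lemma reduce_pow_fpf:
  assumes x: "x \<in> carrier P" and fixed: "(reduce ^^ m) x = x"
  shows "x = \<one>\<^bsub>P\<^esub>"
proof (rule eq_one_if_rows_dvd[OF x])
  fix i j assume i: "i < n"
  have "int (q i) dvd ((L i ^^ m) (row x i) - row x i) t" for t
    using row_reduce_pow_cong[OF i, of m x t] by (simp add: fixed mod_eq_dvd_iff dvd_diff_commute)
  then show "int (q i) dvd row x i j"
    using fpf_L[OF i] row_Zk by (simp add: fpf_power_mod_def injective_mod_def)
qed

theorem fpf_power_aut_reduce: "fpf_power_aut P m reduce"
proof -
  interpret P: group P by (rule product_group) (simp split: prod.splits)
  interpret red: group_hom P P reduce
    by (simp add: group_hom_def group_hom_axioms_def reduce_hom)
  have "kernel P P reduce = {\<one>\<^bsub>P\<^esub>}"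
    unfolding kernel_def using reduce_kernel P.one_closed red.hom_one by blast
  then have inj: "inj_on reduce (carrier P)"
    using red.inj_iff_trivial_ker by blast
  moreover have "reduce ` carrier P = carrier P"
    using endo_inj_surj[OF finite_carrier_P _ inj] reduce_closed by blast
  ultimately have "bij_betw reduce (carrier P) (carrier P)"
    unfolding bij_betw_def by blast
  then show ?thesis
    using reduce_hom reduce_pow_fpf by (simp add: fpf_power_aut_def iso_def)
qed

end

lemma fpf_power_aut_product:
  fixes n m :: nat and d q :: "nat \<Rightarrow> nat"
  assumes "\<And>i. i < n \<Longrightarrow> 0 < q i" and "\<And>i. i < n \<Longrightarrow> d i \<in> fpf_dims (int (q i)) m"
  shows "\<exists>\<psi>. fpf_power_aut (product_group {(i, j). i < n \<and> j < d i}
                                (\<lambda>(i, j). integer_mod_group (q i))) m \<psi>"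
proof -
  have "\<forall>i. \<exists>L. i < n \<longrightarrow> fpf_power_mod (int (q i)) (d i) m L"
    using assms(2) by (simp add: fpf_dims_def)
  then have "\<exists>L. \<forall>i. i < n \<longrightarrow> fpf_power_mod (int (q i)) (d i) m (L i)"
    by (rule choice)
  then obtain L where "\<forall>i. i < n \<longrightarrow> fpf_power_mod (int (q i)) (d i) m (L i)" ..
  then interpret mod_block_product n m d q L
    using assms(1) by unfold_locales simp_all
  show ?thesis using fpf_power_aut_reduce by blast
qed

lemma exists_good_exponent:
  fixes k n :: nat and p r d :: "nat \<Rightarrow> nat"
  assumes prime: "\<And>i. i < n \<Longrightarrow> Factorial_Ring.prime (p i)"
    and "(\<forall>i<n. (p i = 2 \<or> p i = 3) \<longrightarrow> d i \<ge> 2)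
       \<or> ((\<forall>i<n. p i \<noteq> 2) \<and> even k)
       \<or> ((\<forall>i<n. p i = 2 \<longrightarrow> d i \<ge> 2) \<and> 4 dvd k)
       \<or> ((\<forall>i<n. p i = 2 \<longrightarrow> d i \<ge> 3) \<and> even k)
       \<or> ((\<forall>i<n. p i = 2 \<longrightarrow> d i \<ge> 2 \<and> d i \<noteq> 3) \<and> even k \<and> k \<ge> 4)"
  shows "\<exists>m>0. k \<in> norm_dims m \<and> (\<forall>i<n. d i \<in> fpf_dims (int (p i ^ r i)) m)"
  using assms(2)
proof (elim disjE conjE)
  assume "\<forall>i<n. (p i = 2 \<or> p i = 3) \<longrightarrow> d i \<ge> 2"
  then have "d i \<in> fpf_dims (int (p i ^ r i)) 2" if "i < n" for i
    using that by (intro fpf_dims_exponent_2[OF prime[OF that]]) auto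
  then show ?thesis using norm_dims_2 by (intro exI[of _ 2]) auto
next
  assume "\<forall>i<n. p i \<noteq> 2" "even k"
  then have "d i \<in> fpf_dims (int (p i ^ r i)) 3" if "i < n" for i
    using that by (intro fpf_dims_exponent_3[OF prime[OF that]]) auto
  then show ?thesis using norm_dims_3[OF \<open>even k\<close>] by (intro exI[of _ 3]) auto
next
  assume "\<forall>i<n. p i = 2 \<longrightarrow> d i \<ge> 2" "4 dvd k"
  then have "d i \<in> fpf_dims (int (p i ^ r i)) 5" if "i < n" for i
    using that by (intro fpf_dims_exponent_5[OF prime[OF that]]) auto
  then show ?thesis using norm_dims_5[OF \<open>4 dvd k\<close>] by (intro exI[of _ 5]) auto
next
  assume "\<forall>i<n. p i = 2 \<longrightarrow> d i \<ge> 3" "even k"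
  then have "d i \<in> fpf_dims (int (p i ^ r i)) 3" if "i < n" for i
    using that by (intro fpf_dims_exponent_3[OF prime[OF that]]) auto
  then show ?thesis using norm_dims_3[OF \<open>even k\<close>] by (intro exI[of _ 3]) auto
next
  assume "\<forall>i<n. p i = 2 \<longrightarrow> d i \<ge> 2 \<and> d i \<noteq> 3" "even k" "k \<ge> 4"
  then have "d i \<in> fpf_dims (int (p i ^ r i)) 35" if "i < n" for i
    using that by (intro fpf_dims_exponent_35[OF prime[OF that]]) auto
  then show ?thesis using norm_dims_35[OF \<open>even k\<close> \<open>k \<ge> 4\<close>] by (intro exI[of _ 35]) auto
qed

theorem theorem1:
  fixes G :: "('a, 'b) monoid_scheme"
    and k n :: nat and p r d :: "nat \<Rightarrow> nat"
  assumes "k \<ge> 1"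
    and "comm_group G" and "finite (carrier G)"
    and "\<forall>i<n. Factorial_Ring.prime (p i) \<and> r i \<ge> 1 \<and> d i \<ge> 1"
    and "inj_on (\<lambda>i. (p i, r i)) {..<n}"
    and "G \<cong> product_group {(i, j). i < n \<and> j < d i}
                 (\<lambda>(i, j). integer_mod_group (p i ^ r i))"
    and "(\<forall>i<n. (p i = 2 \<or> p i = 3) \<longrightarrow> d i \<ge> 2)
       \<or> ((\<forall>i<n. p i \<noteq> 2) \<and> even k)
       \<or> ((\<forall>i<n. p i = 2 \<longrightarrow> d i \<ge> 2) \<and> 4 dvd k)
       \<or> ((\<forall>i<n. p i = 2 \<longrightarrow> d i \<ge> 3) \<and> even k)
       \<or> ((\<forall>i<n. p i = 2 \<longrightarrow> d i \<ge> 2 \<and> d i \<noteq> 3) \<and> even k \<and> k \<ge> 4)"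
  shows "\<exists>\<phi>. \<phi> \<in> iso (wreath_Zk G k) (wreath_Zk G k) \<and> finite_reidemeister (wreath_Zk G k) \<phi>"
proof -
  have prime: "\<And>i. i < n \<Longrightarrow> Factorial_Ring.prime (p i)"
    using assms(4) by blast
  obtain m where m: "0 < m" "k \<in> norm_dims m" "\<forall>i<n. d i \<in> fpf_dims (int (p i ^ r i)) m"
    using exists_good_exponent[OF prime assms(7)] by blast
  obtain M where M: "vanishing_norm k m M"
    using m(2) by (auto simp: norm_dims_def)
  obtain \<psi> where "fpf_power_aut (product_group {(i, j). i < n \<and> j < d i}
                     (\<lambda>(i, j). integer_mod_group (p i ^ r i))) m \<psi>"
    using fpf_power_aut_product[of n "\<lambda>i. p i ^ r i" d m] m(3) prime
    by (auto simp: prime_gt_0_nat)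
  moreover have "group (product_group {(i, j). i < n \<and> j < d i}
                     (\<lambda>(i, j). integer_mod_group (p i ^ r i)))"
    by (rule product_group) (simp split: prod.splits)
  ultimately obtain \<chi> where "fpf_power_aut G m \<chi>"
    using fpf_power_aut_iso_transfer[OF comm_group.axioms(2)[OF assms(2)] _ assms(6)] by blast
  then show ?thesis
    using wreath_Zk_finite_reidemeister[OF assms(2,3) m(1) _ M] by blast
qed

end
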